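(* Let $p>1$, $s\ge r\ge2$ and $0<\varepsilon<1$. Let $Q$ be an $s$-vertex $r$-graph and let $\mathcal P$ be a hereditary property of $r$-graphs with $\pi(Q,\mathcal P)>0$, and let $0\le\varepsilon'<\varepsilon\,\pi(Q,\mathcal P)/(s!(s-1))$. Then there is $N$ such that for every $n\ge N$ the following holds: if $H_n\in\mathcal P_n$ satisfies $\lambda^{(p)}(Q,H_n)=\lambda^{(p)}(Q,\mathcal P_n)$ and $\mathbf x$ is a principal $Q$-eigenvector of $H_n$ with $(\mathbf x_{\min})^p\ge(1-\varepsilon')/n$, then $$\delta_Q(H_n)\ge(1-\varepsilon)\,\pi(Q,\mathcal P)\binom{n}{s-1}.$$
   Context: An $r$-graph ($r\ge 2$) is a finite hypergraph all of whose edges have exactly $r$ vertices. For $I\subseteq V(H)$, $H[I]$ denotes the induced subhypergraph on $I$. For an $s$-vertex $r$-graph $Q$ and an $r$-graph $H$, $\mathcal N(Q,H)$ is the number of (not necessarily induced) subgraphs of $H$ isomorphic to $Q$. For an $n$-vertex $r$-graph $H$ with vertex set $[n]$ and $\mathbf x\in\mathbb R^n$, $P_{Q,H}(\mathbf x)=s!\sum_{\{i_1,\dots,i_s\}\in\binom{[n]}{s}}\mathcal N(Q,H[\{i_1,\dots,i_s\}])\,x_{i_1}\cdots x_{i_s}$, and for $p\ge1$, $\lambda^{(p)}(Q,H)=\max_{\|\mathbf x\|_p=1}P_{Q,H}(\mathbf x)$. A principal $Q$-eigenvector of $H$ is a nonnegative vector $\mathbf x$ with $\|\mathbf x\|_p=1$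 and $P_{Q,H}(\mathbf x)=\lambda^{(p)}(Q,H)$; $\mathbf x_{\min}$ is its smallest entry. The $Q$-degree of a vertex $v$ is $d_{Q,H}(v)=\sum\mathcal N(Q,H[I])$ over all $s$-subsets $I\subseteq V(H)$ containing $v$, and $\delta_Q(H)$ is the minimum $Q$-degree. A hereditary property $\mathcal P$ of $r$-graphs is a family of $r$-graphs closed under isomorphism and under taking induced subgraphs; as a standing assumption, whenever $H\in\mathcal P$, the disjoint union of $H$ with an isolated vertex is also in $\mathcal P$. $\mathcal P_n$ is the set of members with $n$ vertices; $\lambda^{(p)}(Q,\mathcal P_n)=\max\{\lambda^{(p)}(Q,H):H\in\mathcal P_n\}$; $ex(Q,\mathcal P_n)=\max\{\mathcal N(Q,H):H\in\mathcal P_n\}$ and $\pi(Q,\mathcal P)=\lim_{n\to\infty}ex(Q,\mathcal P_n)/\binom ns$ (this limit exists). *)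

theory Defs
  imports Complex_Main
begin

type_synonym hgraph = "nat set \<times> nat set set"

definition is_rgraph :: "nat \<Rightarrow> hgraph \<Rightarrow> bool" where
  "is_rgraph r H \<longleftrightarrow> finite (fst H) \<and> (\<forall>e\<in>snd H. e \<subseteq> fst H \<and> card e = r)"

definition hg_iso :: "hgraph \<Rightarrow> hgraph \<Rightarrow> bool" where
  "hg_iso H G \<longleftrightarrow> (\<exists>f. bij_betw f (fst H) (fst G) \<and> snd G = (\<lambda>e. f ` e) ` snd H)"

definition induced :: "hgraph \<Rightarrow> nat set \<Rightarrow> hgraph" where
  "induced H I = (I, {e \<in> snd H. e \<subseteq> I})"

definition copies :: "hgraph \<Rightarrow> hgraph \<Rightarrow> nat" where
  "copies Q H = card {G. fst G \<subseteq> fst H \<and> snd G \<subseteq> snd H \<and> (\<forall>e\<in>snd G. e \<subseteq> fst G) \<and> hg_iso G Q}"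

text \<open>Hereditary property of r-graphs (with the standing isolated-vertex assumption).\<close>
definition hereditary :: "nat \<Rightarrow> hgraph set \<Rightarrow> bool" where
  "hereditary r P \<longleftrightarrow>
     (\<forall>H\<in>P. is_rgraph r H) \<and>
     (\<forall>H G. H \<in> P \<longrightarrow> hg_iso H G \<longrightarrow> G \<in> P) \<and>
     (\<forall>H I. H \<in> P \<longrightarrow> I \<subseteq> fst H \<longrightarrow> induced H I \<in> P) \<and>
     (\<forall>H v. H \<in> P \<longrightarrow> v \<notin> fst H \<longrightarrow> (insert v (fst H), snd H) \<in> P)"

text \<open>P_n: members on vertex set [n], represented as {0..<n}.\<close>
definition Pn :: "hgraph set \<Rightarrow> nat \<Rightarrow> hgraph set" where
  "Pn P n = {H \<in> P. fst H = {..<n}}"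

definition polyQ :: "hgraph \<Rightarrow> hgraph \<Rightarrow> (nat \<Rightarrow> real) \<Rightarrow> real" where
  "polyQ Q H x = fact (card (fst Q)) *
     (\<Sum>I\<in>{I. I \<subseteq> fst H \<and> card I = card (fst Q)}. real (copies Q (induced H I)) * (\<Prod>i\<in>I. x i))"

definition pnorm :: "real \<Rightarrow> nat set \<Rightarrow> (nat \<Rightarrow> real) \<Rightarrow> real" where
  "pnorm p V x = (\<Sum>i\<in>V. \<bar>x i\<bar> powr p) powr (1 / p)"

definition lamQ :: "real \<Rightarrow> hgraph \<Rightarrow> hgraph \<Rightarrow> real" where
  "lamQ p Q H = Sup {polyQ Q H x | x. pnorm p (fst H) x = 1}"

definition principal_eigvec :: "real \<Rightarrow> hgraph \<Rightarrow> hgraph \<Rightarrow> (nat \<Rightarrow> real) \<Rightarrow> bool" where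
  "principal_eigvec p Q H x \<longleftrightarrow> (\<forall>i\<in>fst H. 0 \<le> x i) \<and> pnorm p (fst H) x = 1 \<and>
      polyQ Q H x = lamQ p Q H"

definition xmin :: "hgraph \<Rightarrow> (nat \<Rightarrow> real) \<Rightarrow> real" where
  "xmin H x = Min (x ` fst H)"

definition lamQ_prop :: "real \<Rightarrow> hgraph \<Rightarrow> hgraph set \<Rightarrow> nat \<Rightarrow> real" where
  "lamQ_prop p Q P n = Sup ((lamQ p Q) ` Pn P n)"

definition exQ :: "hgraph \<Rightarrow> hgraph set \<Rightarrow> nat \<Rightarrow> nat" where
  "exQ Q P n = Max ((copies Q) ` Pn P n)"

definition piQ :: "hgraph \<Rightarrow> hgraph set \<Rightarrow> real" where
  "piQ Q P = lim (\<lambda>n. real (exQ Q P n) / real (n choose card (fst Q)))"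

definition Qdeg :: "hgraph \<Rightarrow> hgraph \<Rightarrow> nat \<Rightarrow> nat" where
  "Qdeg Q H v = (\<Sum>I\<in>{I. I \<subseteq> fst H \<and> card I = card (fst Q) \<and> v \<in> I}. copies Q (induced H I))"

definition min_Qdeg :: "hgraph \<Rightarrow> hgraph \<Rightarrow> nat" where
  "min_Qdeg Q H = Min ((Qdeg Q H) ` fst H)"

end

theory Submission
  imports Defs "HOL-Library.FuncSet" "HOL-Analysis.Convex"
begin

text \<open>Let \<open>x\<close> be a principal \<open>Q\<close>-eigenvector, \<open>m = x\<^sub>m\<^sub>i\<^sub>n\<close> and \<open>u = n\<^bsup>1/p\<^esup> m\<close>, so that
  \<open>1 - \<epsilon>' \<le> u\<^sup>p \<le> 1\<close>, and put \<open>k = s - 1\<close>. At a vertex \<open>v\<close> the Lagrange condition says that the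
  partial derivative \<open>B\<^sub>v\<close> of \<open>P\<^sub>Q\<^sub>,\<^sub>H\<close> in \<open>x\<^sub>v\<close> equals \<open>s \<lambda> x\<^sub>v\<^bsup>p-1\<^esup> \<ge> s \<lambda> m\<^bsup>p-1\<^esup>\<close>, and testing the
  uniform vector on an extremal graph gives \<open>\<lambda> \<ge> s! \<pi> C(n,s) n\<^bsup>-s/p\<^esup>\<close>. On the other hand
  \<open>B\<^sub>v / s!\<close> is the sum, over the \<open>s\<close>-sets \<open>I\<close> containing \<open>v\<close>, of \<open>N(Q,H[I])\<close> times the product of
  the \<open>x\<^sub>i\<close> with \<open>i \<in> I - {v}\<close>. An \<open>s\<close>-set carries at most \<open>s!\<close> copies of \<open>Q\<close> and every such product
  is at least \<open>m\<^sup>k\<close>, so \<open>B\<^sub>v / s! \<le> d\<^sub>Q(v) m\<^sup>k + s! (e\<^sub>k - C(n-1,k) m\<^sup>k)\<close>, where the elementary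
  symmetric sum \<open>e\<^sub>k\<close> of the other entries is at most \<open>(n m / u)\<^sup>k / k!\<close> by Maclaurin's and the
  power mean inequality. Comparing the two bounds and writing \<open>X = 1/u\<close>,
  \<open>d\<^sub>Q(v) \<ge> C(n-1,k) (\<pi> u\<^sup>p X\<^bsup>k+1\<^esup> - s! (X\<^sup>k - 1)) - s! X\<^sup>k (n\<^sup>k/k! - C(n-1,k))\<close>.
  The bracket is at least \<open>(1 - \<epsilon>\<^sub>1) \<pi>\<close> as soon as \<open>s! k (1 - u\<^sup>p) \<le> \<epsilon>\<^sub>1 \<pi>\<close>, which is where the
  bound on \<open>\<epsilon>'\<close> enters, and the last term is \<open>o(C(n,k))\<close>.\<close>

section \<open>Real inequalities\<close>

lemma le_one_of_powr_le_one:
  fixes x p :: real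
  assumes "0 \<le> x" and "0 < p" and "x powr p \<le> 1"
  shows "x \<le> 1"
proof (rule ccontr)
  assume "\<not> x \<le> 1"
  then have "1 powr p < x powr p" using assms(2) by (intro powr_less_mono2) auto
  then show False using assms(3) by simp
qed

lemma power_mult_one_minus_le:
  fixes e X :: real
  assumes "1 \<le> k" and "real k * e \<le> 1" and "0 \<le> e" and "2 * e \<le> 1"
    and "1 \<le> X" and "(1 - e) * X \<le> 1"
  shows "X ^ k * (1 - (1 - e) * X) \<le> real k * e"
  using assms(1,2)
proof (induction k rule: nat_induct_at_least)
  case base
  have "1 - e \<le> (1 - e) * X" using mult_left_mono[OF assms(5), of "1 - e"] assms(4) by simp
  then have "e \<le> (1 - e) * X" using assms(4) by linarith
  then have "0 \<le> (X - 1) * ((1 - e) * X - e)" using assms(5) by simp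
  moreover have "e - X * (1 - (1 - e) * X) = (X - 1) * ((1 - e) * X - e)"
    by (simp add: algebra_simps)
  ultimately show ?case by simp
next
  case (Suc k)
  have ke: "real k * e \<le> 1 - e" using Suc.prems by (simp add: algebra_simps)
  then have "real k * e * X \<le> (1 - e) * X" using assms(5) by (intro mult_right_mono) auto
  then have kX: "real k * X \<le> real k + 1"
    using assms(6) mult_left_mono[OF assms(6), of "real k"] by (simp add: algebra_simps)
  have "X ^ Suc k * (1 - (1 - e) * X) = X * (X ^ k * (1 - (1 - e) * X))" by simp
  also have "\<dots> \<le> X * (real k * e)"
    using Suc.IH ke assms(3,5) by (intro mult_left_mono) auto
  also have "\<dots> = (real k * X) * e" by simp
  also have "\<dots> \<le> (real k + 1) * e" using kX assms(3) by (rule mult_right_mono)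
  finally show ?case by (simp add: add.commute)
qed

lemma power_minus_one_le:
  fixes e X :: real
  assumes "0 \<le> e" and "2 * e \<le> 1" and "1 \<le> X" and "(1 - e) * X \<le> 1"
  shows "X ^ k - 1 \<le> real k * e * (1 - e) * X ^ (k + 1)"
proof (induction k)
  case 0
  then show ?case by simp
next
  case (Suc k)
  have "e * (1 - e) * X ^ 2 - (X - 1) = (1 - (1 - e) * X) * (1 - e * X)"
    by (simp add: algebra_simps power2_eq_square)
  moreover have "e * X \<le> (1 - e) * X" using assms by (intro mult_right_mono) auto
  ultimately have X1: "X - 1 \<le> e * (1 - e) * X ^ 2"
    using assms(4) by (smt (verit) mult_nonneg_nonneg)
  have "X ^ 2 \<le> X ^ (k + 2)" using assms(3) by (intro power_increasing) auto
  then have "e * (1 - e) * X ^ 2 \<le> e * (1 - e) * X ^ (k + 2)"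
    using assms(1,2) by (intro mult_left_mono) auto
  moreover have "X * (X ^ k - 1) \<le> X * (real k * e * (1 - e) * X ^ (k + 1))"
    using Suc.IH assms(3) by (intro mult_left_mono) auto
  ultimately have "X * (X ^ k - 1) + (X - 1) \<le> real (Suc k) * e * (1 - e) * X ^ (k + 2)"
    using X1 by (simp add: algebra_simps)
  then show ?case by (simp add: algebra_simps)
qed

lemma power_tradeoff_lower_bound:
  fixes \<pi> c \<epsilon> e X :: real
  assumes "1 \<le> k" and "0 < \<pi>" and "\<pi> \<le> c" and "c * real k * e \<le> \<epsilon> * \<pi>" and "\<epsilon> \<le> 1"
    and "0 \<le> e" and "2 * e \<le> 1" and "1 \<le> X" and "(1 - e) * X \<le> 1"
  shows "(1 - \<epsilon>) * \<pi> \<le> \<pi> * (1 - e) * X ^ (k + 1) - c * (X ^ k - 1)"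
proof -
  have "\<epsilon> * \<pi> \<le> 1 * \<pi>" using assms(2,5) by (intro mult_right_mono) auto
  then have "\<epsilon> * \<pi> \<le> c * 1" using assms(3) by simp
  then have "c * (real k * e) \<le> c * 1" using assms(4) by (simp add: mult.assoc)
  then have ke: "real k * e \<le> 1" using assms(2,3) by simp
  define Y where "Y = (1 - e) * X ^ (k + 1)"
  show ?thesis
  proof (cases "1 \<le> Y")
    case True
    have "c * (X ^ k - 1) \<le> c * (real k * e * Y)"
      using power_minus_one_le[OF assms(6-9), of k] assms(2,3) by (intro mult_left_mono) (auto simp: Y_def)
    also have "\<dots> \<le> \<epsilon> * \<pi> * Y"
      using assms(4) True by (simp add: mult.assoc[symmetric] mult_right_mono)
    also have "\<dots> \<le> \<pi> * Y - (1 - \<epsilon>) * \<pi>"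
      using True assms(2,5) mult_nonneg_nonneg[of "\<pi> * (1 - \<epsilon>)" "Y - 1"]
      by (simp add: algebra_simps)
    finally show ?thesis by (simp add: Y_def algebra_simps)
  next
    case False
    have "c * (X ^ k - 1) + \<pi> * (1 - Y) \<le> c * (X ^ k - 1) + c * (1 - Y)"
      using False assms(3) by (intro add_left_mono mult_right_mono) auto
    also have "\<dots> = c * (X ^ k * (1 - (1 - e) * X))" by (simp add: Y_def algebra_simps)
    also have "\<dots> \<le> c * (real k * e)"
      using power_mult_one_minus_le[OF assms(1) ke assms(6-9)] assms(2,3) by (intro mult_left_mono) auto
    also have "\<dots> \<le> \<epsilon> * \<pi>" using assms(4) by (simp add: mult.assoc)
    finally have "c * (X ^ k - 1) + \<pi> * (1 - Y) \<le> \<epsilon> * \<pi>" .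
    then show ?thesis by (simp add: Y_def algebra_simps)
  qed
qed

lemma pow_diff_le_fact_mult_choose: "k \<le> n \<Longrightarrow> real (n - k) ^ k \<le> fact k * real (n choose k)"
proof (induction k arbitrary: n)
  case 0
  then show ?case by simp
next
  case (Suc k)
  have "real (n - Suc k) ^ Suc k = real (n - Suc k) * real (n - 1 - k) ^ k" by simp
  also have "\<dots> \<le> real n * (fact k * real (n - 1 choose k))"
    using Suc.IH[of "n - 1"] Suc.prems by (intro mult_mono) auto
  also have "\<dots> = fact k * (real n * real (n - 1 choose k))" by (simp only: mult_ac)
  also have "\<dots> = fact k * (real (Suc k) * real (n choose Suc k))"
    using arg_cong[OF binomial_absorption[of k n], of real] unfolding of_nat_mult by simp
  also have "\<dots> = fact (Suc k) * real (n choose Suc k)" by (simp only: fact_Suc mult_ac)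
  finally show ?case .
qed

text \<open>Since \<open>C(n-1,k) = t C(n,k)\<close> and \<open>n\<^sup>k/k! \<le> C(n,k) / t\<^sup>k\<close> with \<open>t = 1 - k/n \<longrightarrow> 1\<close>, the right-hand
  side divided by \<open>C(n,k)\<close> tends to \<open>\<beta>\<close>.\<close>

lemma eventually_choose_tradeoff:
  fixes \<alpha> \<beta> \<gamma> :: real
  assumes "\<alpha> < \<beta>" and "0 \<le> \<gamma>"
  shows "eventually (\<lambda>n. \<alpha> * real (n choose k)
    \<le> \<beta> * real (n - 1 choose k) - \<gamma> * (real n ^ k / fact k - real (n - 1 choose k))) sequentially"
proof -
  define \<phi> where "\<phi> t = (\<beta> + \<gamma>) * t - \<gamma> * (1 / t) ^ k" for t :: real
  have "(\<lambda>n. 1 - real k / real n) \<longlonglongrightarrow> 1 - 0"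
    by (intro tendsto_intros lim_const_over_n)
  then have "(\<lambda>n. \<phi> (1 - real k / real n)) \<longlonglongrightarrow> \<phi> 1"
    unfolding \<phi>_def by (auto intro!: tendsto_eq_intros)
  moreover have "\<alpha> < \<phi> 1" using assms(1) by (simp add: \<phi>_def)
  ultimately have "eventually (\<lambda>n. \<alpha> < \<phi> (1 - real k / real n)) sequentially"
    by (rule order_tendstoD(1))
  moreover have "eventually (\<lambda>n. k < n) sequentially" by (rule eventually_gt_at_top)
  ultimately show ?thesis
  proof eventually_elim
    case (elim n)
    define t where "t = 1 - real k / real n"
    define C where "C = real (n choose k)"
    have n0: "real n > 0" and t0: "t > 0" using elim(2) by (simp_all add: t_def field_simps)
    have "real (n - k) * C = real n * real (n - 1 choose k)"
      using binomial_absorb_comp[of n k] unfolding C_def by (metis of_nat_mult)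
    then have C': "real (n - 1 choose k) = t * C" using n0 elim(2) by (simp add: t_def field_simps)
    have "real n * t = real (n - k)" using elim(2) n0 by (simp add: t_def field_simps)
    then have "(real n * t) ^ k \<le> fact k * C"
      using pow_diff_le_fact_mult_choose[of k n] elim(2) by (simp add: C_def)
    then have "real n ^ k / fact k \<le> C * (1 / t) ^ k"
      using t0 by (simp add: power_mult_distrib field_simps)
    then have "\<gamma> * (real n ^ k / fact k) \<le> \<gamma> * (C * (1 / t) ^ k)" using assms(2) by (rule mult_left_mono)
    moreover have "\<alpha> * C \<le> \<phi> t * C" using elim(1) by (intro mult_right_mono) (auto simp: t_def C_def)
    ultimately show ?case unfolding C' \<phi>_def C_def by (simp add: algebra_simps)
  qed
qed

section \<open>Copies of \<open>Q\<close>\<close>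

definition ksets :: "'a set \<Rightarrow> nat \<Rightarrow> 'a set set" where
  "ksets W k = {J. J \<subseteq> W \<and> card J = k}"

lemma finite_ksets: "finite W \<Longrightarrow> finite (ksets W k)"
  unfolding ksets_def by (auto intro: finite_subset[of _ "Pow W"])

lemma finite_ksets_member: "finite W \<Longrightarrow> J \<in> ksets W k \<Longrightarrow> finite J"
  unfolding ksets_def using finite_subset by blast

lemma card_ksets: "finite W \<Longrightarrow> card (ksets W k) = card W choose k"
  unfolding ksets_def by (rule n_subsets)

definition copy_set :: "hgraph \<Rightarrow> hgraph \<Rightarrow> hgraph set" where
  "copy_set Q H = {G. fst G \<subseteq> fst H \<and> snd G \<subseteq> snd H \<and> (\<forall>e\<in>snd G. e \<subseteq> fst G) \<and> hg_iso G Q}"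

lemma copies_eq_card_copy_set: "copies Q H = card (copy_set Q H)"
  by (simp add: copies_def copy_set_def)

lemma finite_copy_set:
  assumes "finite (fst H)"
  shows "finite (copy_set Q H)"
proof (rule finite_subset)
  show "copy_set Q H \<subseteq> Pow (fst H) \<times> Pow (Pow (fst H))"
  proof
    fix G assume "G \<in> copy_set Q H"
    then show "G \<in> Pow (fst H) \<times> Pow (Pow (fst H))"
      by (cases G) (auto simp: copy_set_def)
  qed
qed (use assms in simp)

lemma hg_iso_card:
  assumes "hg_iso G Q" and "finite (fst Q)"
  shows "finite (fst G)" and "card (fst G) = card (fst Q)"
proof -
  obtain f where f: "bij_betw f (fst G) (fst Q)" using assms(1) unfolding hg_iso_def by blast
  show "finite (fst G)" using bij_betw_finite[OF f] assms(2) by simp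
  show "card (fst G) = card (fst Q)" using bij_betw_same_card[OF f] .
qed

lemma copy_set_induced:
  assumes "finite (fst Q)" and "I \<in> ksets (fst H) (card (fst Q))" and "finite I"
  shows "copy_set Q (induced H I) = {G \<in> copy_set Q H. fst G = I}"
proof (intro equalityI subsetI)
  fix G assume G: "G \<in> copy_set Q (induced H I)"
  then have "fst G \<subseteq> I" and "hg_iso G Q" by (auto simp: copy_set_def induced_def)
  moreover have "card (fst G) = card I"
    using hg_iso_card(2)[OF \<open>hg_iso G Q\<close> assms(1)] assms(2) by (simp add: ksets_def)
  ultimately have "fst G = I" using card_subset_eq[OF assms(3)] by blast
  then show "G \<in> {G \<in> copy_set Q H. fst G = I}"
    using G assms(2) by (auto simp: copy_set_def induced_def ksets_def)
qed (auto simp: copy_set_def induced_def)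

lemma copies_eq_sum_induced:
  assumes "finite (fst H)" and "finite (fst Q)"
  shows "copies Q H = (\<Sum>I\<in>ksets (fst H) (card (fst Q)). copies Q (induced H I))"
proof -
  let ?T = "ksets (fst H) (card (fst Q))"
  have "fst ` copy_set Q H \<subseteq> ?T"
    using hg_iso_card(2)[OF _ assms(2)] by (auto simp: copy_set_def ksets_def)
  then have "(\<Sum>G\<in>copy_set Q H. 1) = (\<Sum>I\<in>?T. \<Sum>G\<in>{G \<in> copy_set Q H. fst G = I}. 1::nat)"
    by (rule sum.group[symmetric, OF finite_copy_set[OF assms(1)] finite_ksets[OF assms(1)]])
  then have "copies Q H = (\<Sum>I\<in>?T. \<Sum>G\<in>{G \<in> copy_set Q H. fst G = I}. 1)"
    by (simp add: copies_eq_card_copy_set)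
  also have "\<dots> = (\<Sum>I\<in>?T. copies Q (induced H I))"
    using finite_ksets_member[OF assms(1)]
    by (intro sum.cong refl) (simp add: copies_eq_card_copy_set copy_set_induced[OF assms(2)])
  finally show ?thesis .
qed

lemma copy_set_on_kset:
  assumes "finite I" and "card I = card (fst Q)" and "G \<in> copy_set Q (I, E)"
  obtains h where "bij_betw h (fst Q) I" and "G = (I, (\<lambda>e. h ` e) ` snd Q)"
proof -
  obtain f where f: "bij_betw f (fst G) (fst Q)" "snd Q = (\<lambda>e. f ` e) ` snd G"
    using assms(3) by (auto simp: copy_set_def hg_iso_def)
  have sub: "fst G \<subseteq> I" and eG: "\<forall>e\<in>snd G. e \<subseteq> fst G"
    using assms(3) by (auto simp: copy_set_def)
  have "card (fst G) = card I" using bij_betw_same_card[OF f(1)] assms(2) by simp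
  then have fG: "fst G = I" using card_subset_eq[OF assms(1) sub] by simp
  define h where "h = the_inv_into (fst G) f"
  have hb: "bij_betw h (fst Q) (fst G)" unfolding h_def by (rule bij_betw_the_inv_into[OF f(1)])
  have hf: "h (f x) = x" if "x \<in> fst G" for x
    unfolding h_def using the_inv_into_f_f[OF bij_betw_imp_inj_on[OF f(1)] that] .
  have "h ` f ` e = e" if "e \<in> snd G" for e
  proof -
    have "e \<subseteq> fst G" using eG that by blast
    then have "(\<lambda>x. h (f x)) ` e = (\<lambda>x. x) ` e" using hf by (intro image_cong) auto
    then show ?thesis by (simp add: image_image)
  qed
  then have "(\<lambda>e. h ` e) ` snd Q = (\<lambda>e. e) ` snd G"
    unfolding f(2) image_image by (intro image_cong) auto
  then have "(\<lambda>e. h ` e) ` snd Q = snd G" by simp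
  then show ?thesis using that hb fG by (metis prod.collapse)
qed

lemma copies_le_fact:
  assumes "\<forall>e\<in>snd Q. e \<subseteq> fst Q" and "finite (fst Q)" and "finite I" and "card I = card (fst Q)"
  shows "copies Q (I, E) \<le> fact (card (fst Q))"
proof -
  let ?F = "{h \<in> fst Q \<rightarrow>\<^sub>E I. inj_on h (fst Q)}"
  let ?emb = "\<lambda>h. (I, (\<lambda>e. h ` e) ` snd Q)"
  have "copy_set Q (I, E) \<subseteq> ?emb ` ?F"
  proof
    fix G assume "G \<in> copy_set Q (I, E)"
    then obtain h where h: "bij_betw h (fst Q) I" "G = ?emb h"
      using copy_set_on_kset[OF assms(3,4)] by blast
    have hF: "restrict h (fst Q) \<in> ?F"
      using h(1) bij_betwE[OF h(1)] by (simp add: bij_betw_def inj_on_def)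
    have "(\<lambda>e. restrict h (fst Q) ` e) ` snd Q = (\<lambda>e. h ` e) ` snd Q"
    proof (rule image_cong[OF refl])
      fix e assume "e \<in> snd Q"
      then have "e \<subseteq> fst Q" using assms(1) by blast
      then show "restrict h (fst Q) ` e = h ` e" by (intro image_cong) auto
    qed
    then have "G = ?emb (restrict h (fst Q))" using h(2) by simp
    then show "G \<in> ?emb ` ?F" using hF by (rule image_eqI)
  qed
  moreover have "finite ?F"
    using finite_PiE[OF assms(2), of "\<lambda>_. I"] assms(3) by (simp add: finite_subset)
  ultimately have "copies Q (I, E) \<le> card (?emb ` ?F)"
    unfolding copies_eq_card_copy_set by (intro card_mono finite_imageI)
  also have "\<dots> \<le> card ?F" using \<open>finite ?F\<close> by (rule card_image_le)
  also have "card ?F = (\<Prod>i = 0..<card (fst Q). card (fst Q) - i)"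
    using card_inj_on_subset_funcset[OF assms(2,3) order_refl] assms(4) by simp
  also have "\<dots> = fact (card (fst Q))" by (metis fact_prod_rev of_nat_id)
  finally show ?thesis .
qed

text \<open>On two vertices every edge of an \<open>r\<close>-graph with \<open>r \<ge> 2\<close> is the whole vertex set, so a copy
  is determined by its vertex set.\<close>

lemma copies_le_one:
  assumes "is_rgraph r Q" and "2 \<le> r" and "card (fst Q) = 2"
    and "finite I" and "card I = card (fst Q)"
  shows "copies Q (I, E) \<le> 1"
proof -
  have fQ: "finite (fst Q)" using assms(1) by (simp add: is_rgraph_def)
  have "copy_set Q (I, E) \<subseteq> {(I, (\<lambda>e. I) ` snd Q)}"
  proof
    fix G assume "G \<in> copy_set Q (I, E)"
    then obtain h where h: "bij_betw h (fst Q) I" "G = (I, (\<lambda>e. h ` e) ` snd Q)"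
      using copy_set_on_kset[OF assms(4,5)] by blast
    have "h ` e = I" if "e \<in> snd Q" for e
    proof -
      have "e \<subseteq> fst Q" "card e = r" using assms(1) that by (auto simp: is_rgraph_def)
      moreover have "card e \<le> card (fst Q)" using card_mono[OF fQ] \<open>e \<subseteq> fst Q\<close> by blast
      ultimately have "e = fst Q" using card_subset_eq[OF fQ] assms(2,3) by simp
      then show ?thesis using h(1) by (simp add: bij_betw_def)
    qed
    then have "(\<lambda>e. h ` e) ` snd Q = (\<lambda>e. I) ` snd Q" by (intro image_cong) auto
    then show "G \<in> {(I, (\<lambda>e. I) ` snd Q)}" using h(2) by simp
  qed
  then show ?thesis unfolding copies_eq_card_copy_set using card_mono[of "{(I, (\<lambda>e. I) ` snd Q)}"] by simp
qed

lemma hg_iso_image: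
  assumes "inj_on f (fst C)" and "\<forall>e\<in>snd C. e \<subseteq> fst C" and "hg_iso C Q"
  shows "hg_iso (f ` fst C, (\<lambda>e. f ` e) ` snd C) Q"
proof -
  obtain g where g: "bij_betw g (fst C) (fst Q)" "snd Q = (\<lambda>e. g ` e) ` snd C"
    using assms(3) by (auto simp: hg_iso_def)
  define fi where "fi = the_inv_into (fst C) f"
  have "bij_betw fi (f ` fst C) (fst C)"
    unfolding fi_def using assms(1) by (simp add: bij_betw_the_inv_into inj_on_imp_bij_betw)
  then have bij: "bij_betw (g \<circ> fi) (f ` fst C) (fst Q)" using g(1) by (rule bij_betw_trans)
  have eq: "(g \<circ> fi) ` f ` e = g ` e" if "e \<in> snd C" for e
  proof -
    have "e \<subseteq> fst C" using assms(2) that by blast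
    then have "(\<lambda>x. g (fi (f x))) ` e = g ` e"
      unfolding fi_def using the_inv_into_f_f[OF assms(1)] by (intro image_cong) auto
    then show ?thesis by (simp add: image_image)
  qed
  have "(\<lambda>e. (g \<circ> fi) ` e) ` (\<lambda>e. f ` e) ` snd C = (\<lambda>e. (g \<circ> fi) ` f ` e) ` snd C"
    by (simp only: image_image)
  also have "\<dots> = snd Q" unfolding g(2) by (rule image_cong[OF refl eq])
  finally have "(\<lambda>e. (g \<circ> fi) ` e) ` (\<lambda>e. f ` e) ` snd C = snd Q" .
  then show ?thesis using bij unfolding hg_iso_def by (metis fst_conv snd_conv)
qed

lemma copies_le_of_hg_iso:
  assumes "finite (fst H)" and "hg_iso H G"
  shows "copies Q H \<le> copies Q G"
proof -
  obtain f where f: "bij_betw f (fst H) (fst G)" and E: "snd G = (\<lambda>e. f ` e) ` snd H"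
    using assms(2) by (auto simp: hg_iso_def)
  define \<phi> where "\<phi> C = (f ` fst C, (\<lambda>e. f ` e) ` snd C)" for C :: hgraph
  have injf: "inj_on f (fst H)" using f bij_betw_imp_inj_on by blast
  have sub: "fst C \<subseteq> fst H" "snd C \<subseteq> Pow (fst H)" if "C \<in> copy_set Q H" for C
    using that by (auto simp: copy_set_def)
  have "inj_on \<phi> (copy_set Q H)"
  proof (rule inj_onI)
    fix C1 C2 assume C: "C1 \<in> copy_set Q H" "C2 \<in> copy_set Q H" and eq: "\<phi> C1 = \<phi> C2"
    have "fst C1 = fst C2"
      using eq inj_on_image_eq_iff[OF injf sub(1)[OF C(1)] sub(1)[OF C(2)]] by (simp add: \<phi>_def)
    moreover have "snd C1 = snd C2"
      using eq inj_on_image_eq_iff[OF inj_on_image_Pow[OF injf] sub(2)[OF C(1)] sub(2)[OF C(2)]]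
      by (simp add: \<phi>_def)
    ultimately show "C1 = C2" by (simp add: prod_eq_iff)
  qed
  moreover have "\<phi> ` copy_set Q H \<subseteq> copy_set Q G"
  proof
    fix D assume "D \<in> \<phi> ` copy_set Q H"
    then obtain C where C: "C \<in> copy_set Q H" and D: "D = \<phi> C" by blast
    have c: "fst C \<subseteq> fst H" "snd C \<subseteq> snd H" "\<forall>e\<in>snd C. e \<subseteq> fst C" "hg_iso C Q"
      using C by (auto simp: copy_set_def)
    have "hg_iso D Q"
      unfolding D \<phi>_def using hg_iso_image[OF inj_on_subset[OF injf c(1)] c(3,4)] .
    moreover have "f ` fst C \<subseteq> fst G" using c(1) f by (auto simp: bij_betw_def)
    moreover have "\<forall>e\<in>(\<lambda>e. f ` e) ` snd C. e \<subseteq> f ` fst C" using c(3) by blast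
    ultimately show "D \<in> copy_set Q G" using c(2) E by (auto simp: copy_set_def D \<phi>_def)
  qed
  ultimately have "card (copy_set Q H) \<le> card (copy_set Q G)"
    using finite_copy_set[OF bij_betw_finite[OF f, THEN iffD1, OF assms(1)]]
    by (metis card_image card_mono)
  then show ?thesis by (simp add: copies_eq_card_copy_set)
qed

section \<open>Hereditary properties and the density \<open>\<pi>(Q, P)\<close>\<close>

lemma hereditary_rgraph: "hereditary r P \<Longrightarrow> H \<in> P \<Longrightarrow> is_rgraph r H"
  unfolding hereditary_def by blast

lemma hereditary_hg_iso: "hereditary r P \<Longrightarrow> H \<in> P \<Longrightarrow> hg_iso H G \<Longrightarrow> G \<in> P"
  unfolding hereditary_def by blast

lemma hereditary_induced: "hereditary r P \<Longrightarrow> H \<in> P \<Longrightarrow> I \<subseteq> fst H \<Longrightarrow> induced H I \<in> P"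
  unfolding hereditary_def by blast

lemma hereditary_add_vertex:
  "hereditary r P \<Longrightarrow> H \<in> P \<Longrightarrow> v \<notin> fst H \<Longrightarrow> (insert v (fst H), snd H) \<in> P"
  unfolding hereditary_def by blast

lemma finite_Pn:
  assumes "hereditary r P"
  shows "finite (Pn P n)"
proof (rule finite_subset)
  show "Pn P n \<subseteq> {{..<n}} \<times> Pow (Pow {..<n})"
  proof
    fix H assume H: "H \<in> Pn P n"
    then have "fst H = {..<n}" and "is_rgraph r H"
      using hereditary_rgraph[OF assms] by (auto simp: Pn_def)
    then show "H \<in> {{..<n}} \<times> Pow (Pow {..<n})" by (cases H) (auto simp: is_rgraph_def)
  qed
qed simp

lemma edgeless_in_hereditary:
  assumes "hereditary r P" and "0 < r" and "H \<in> P"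
  shows "({..<n}, {}) \<in> P"
proof (induction n)
  case 0
  have "\<forall>e\<in>snd H. card e = r" using hereditary_rgraph[OF assms(1,3)] by (simp add: is_rgraph_def)
  then have "induced H {} = ({}, {})" using assms(2) by (auto simp: induced_def)
  then show ?case using hereditary_induced[OF assms(1,3), of "{}"] by simp
next
  case (Suc n)
  then show ?case
    using hereditary_add_vertex[OF assms(1) Suc, of n] by (simp add: lessThan_Suc)
qed

lemma exQ_attained:
  assumes "hereditary r P" and "0 < r" and "P \<noteq> {}"
  obtains H where "H \<in> Pn P n" and "copies Q H = exQ Q P n"
proof -
  obtain H where "H \<in> P" using assms(3) by blast
  then have "({..<n}, {}) \<in> Pn P n" using edgeless_in_hereditary[OF assms(1,2)] by (simp add: Pn_def)
  then have "Pn P n \<noteq> {}" by blast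
  then have "exQ Q P n \<in> copies Q ` Pn P n"
    unfolding exQ_def using finite_Pn[OF assms(1)] by (intro Max_in) auto
  then show ?thesis using that by auto
qed

lemma copies_le_exQ: "hereditary r P \<Longrightarrow> H \<in> Pn P n \<Longrightarrow> copies Q H \<le> exQ Q P n"
  unfolding exQ_def using finite_Pn by (intro Max_ge) auto

lemma copies_delete_vertex_le_exQ:
  assumes "hereditary r P" and "H \<in> Pn P (Suc n)" and "v < Suc n"
  shows "copies Q (induced H (fst H - {v})) \<le> exQ Q P n"
proof -
  let ?W = "{..<Suc n} - {v}"
  have HP: "H \<in> P" and fH: "fst H = {..<Suc n}" using assms(2) by (auto simp: Pn_def)
  define f where "f i = (if i < v then i else i - 1)" for i :: nat
  define G where "G = ({..<n}, (\<lambda>e. f ` e) ` snd (induced H ?W))"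
  have "bij_betw f ?W {..<n}"
    by (rule bij_betw_byWitness[where f'="\<lambda>i. if i < v then i else i + 1"])
      (use assms(3) in \<open>auto simp: f_def\<close>)
  then have iso: "hg_iso (induced H ?W) G"
    unfolding hg_iso_def G_def induced_def by (intro exI[of _ f] conjI) simp_all
  have "induced H ?W \<in> P" using hereditary_induced[OF assms(1) HP] fH by auto
  then have "G \<in> Pn P n" using hereditary_hg_iso[OF assms(1) _ iso] by (simp add: Pn_def G_def)
  have "copies Q (induced H ?W) \<le> copies Q G"
    by (rule copies_le_of_hg_iso[OF _ iso]) (simp add: induced_def)
  also have "\<dots> \<le> exQ Q P n" by (rule copies_le_exQ[OF assms(1) \<open>G \<in> Pn P n\<close>])
  finally show ?thesis using fH by simp
qed

lemma induced_induced: "I \<subseteq> W \<Longrightarrow> induced (induced H W) I = induced H I"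
  by (auto simp: induced_def)

lemma sum_copies_delete_vertex:
  assumes "finite (fst H)" and "finite (fst Q)"
  shows "(\<Sum>v\<in>fst H. copies Q (induced H (fst H - {v}))) = (card (fst H) - card (fst Q)) * copies Q H"
proof -
  let ?V = "fst H" and ?s = "card (fst Q)"
  let ?T = "ksets ?V ?s" and ?N = "\<lambda>I. copies Q (induced H I)"
  have "copies Q (induced H (?V - {v})) = (\<Sum>I\<in>{I \<in> ?T. v \<notin> I}. ?N I)" for v
  proof -
    have "copies Q (induced H (?V - {v})) = (\<Sum>I\<in>ksets (?V - {v}) ?s. copies Q (induced (induced H (?V - {v})) I))"
      using copies_eq_sum_induced[of "induced H (?V - {v})"] assms by (simp add: induced_def)
    also have "\<dots> = (\<Sum>I\<in>ksets (?V - {v}) ?s. ?N I)"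
      by (intro sum.cong refl) (simp add: ksets_def induced_induced)
    also have "ksets (?V - {v}) ?s = {I \<in> ?T. v \<notin> I}" by (auto simp: ksets_def)
    finally show ?thesis .
  qed
  then have "(\<Sum>v\<in>?V. copies Q (induced H (?V - {v}))) = (\<Sum>v\<in>?V. \<Sum>I\<in>{I \<in> ?T. v \<notin> I}. ?N I)"
    by simp
  also have "\<dots> = (\<Sum>I\<in>?T. \<Sum>v\<in>{v \<in> ?V. v \<notin> I}. ?N I)"
    by (rule sum.swap_restrict[OF assms(1) finite_ksets[OF assms(1)]])
  also have "\<dots> = (\<Sum>I\<in>?T. (card ?V - ?s) * ?N I)"
  proof (intro sum.cong refl)
    fix I assume I: "I \<in> ?T"
    then have "card {v \<in> ?V. v \<notin> I} = card ?V - ?s"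
      using finite_ksets_member[OF assms(1) I] card_Diff_subset[of I ?V]
      by (auto simp: ksets_def set_diff_eq[symmetric])
    then show "(\<Sum>v\<in>{v \<in> ?V. v \<notin> I}. ?N I) = (card ?V - ?s) * ?N I" by simp
  qed
  also have "\<dots> = (card ?V - ?s) * copies Q H"
    by (simp add: sum_distrib_left[symmetric] copies_eq_sum_induced[OF assms])
  finally show ?thesis .
qed

lemma exQ_Suc_le:
  assumes "hereditary r P" and "0 < r" and "P \<noteq> {}" and "finite (fst Q)"
  shows "(Suc n - card (fst Q)) * exQ Q P (Suc n) \<le> Suc n * exQ Q P n"
proof -
  obtain H where H: "H \<in> Pn P (Suc n)" "copies Q H = exQ Q P (Suc n)"
    using exQ_attained[OF assms(1-3)] by blast
  have fH: "fst H = {..<Suc n}" using H by (simp add: Pn_def)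
  have "(Suc n - card (fst Q)) * exQ Q P (Suc n) = (\<Sum>v\<in>fst H. copies Q (induced H (fst H - {v})))"
    using sum_copies_delete_vertex[of H Q] fH assms(4) H(2) by simp
  also have "\<dots> \<le> (\<Sum>v\<in>fst H. exQ Q P n)"
    using copies_delete_vertex_le_exQ[OF assms(1) H(1)] fH by (intro sum_mono) auto
  also have "\<dots> = Suc n * exQ Q P n" using fH by simp
  finally show ?thesis .
qed

definition ex_density :: "hgraph \<Rightarrow> hgraph set \<Rightarrow> nat \<Rightarrow> real" where
  "ex_density Q P n = real (exQ Q P n) / real (n choose card (fst Q))"

lemma ex_density_Suc_le:
  assumes "hereditary r P" and "0 < r" and "P \<noteq> {}" and "finite (fst Q)" and "card (fst Q) \<le> n"
  shows "ex_density Q P (Suc n) \<le> ex_density Q P n"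
proof -
  let ?s = "card (fst Q)"
  define d where "d = real (Suc n - ?s)"
  define C where "C = real (n choose ?s)"
  define C' where "C' = real (Suc n choose ?s)"
  define e where "e = real (exQ Q P n)"
  define e' where "e' = real (exQ Q P (Suc n))"
  have pos: "0 < d" "0 < C" "0 < C'" using assms(5) by (simp_all add: d_def C_def C'_def)
  have dC: "d * C' = real (Suc n) * C"
    using arg_cong[OF binomial_absorb_comp[of "Suc n" ?s], of real]
    unfolding d_def C_def C'_def of_nat_mult by simp
  have "d * e' \<le> real (Suc n) * e"
    using exQ_Suc_le[OF assms(1-4), of n] unfolding d_def e_def e'_def by (metis of_nat_le_iff of_nat_mult)
  then have "(d * e') * C \<le> (real (Suc n) * e) * C" using pos(2) by (intro mult_right_mono) auto
  also have "\<dots> = (e * C') * d" using dC by (simp add: mult_ac)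
  finally have "e' * C \<le> e * C'" using pos(1) by (simp add: mult_ac)
  then show ?thesis using pos(2,3) by (simp add: ex_density_def C_def C'_def e_def e'_def divide_simps)
qed

lemma ex_density_tendsto_piQ:
  assumes "hereditary r P" and "0 < r" and "P \<noteq> {}" and "finite (fst Q)"
  shows "ex_density Q P \<longlonglongrightarrow> piQ Q P"
    and "card (fst Q) \<le> n \<Longrightarrow> piQ Q P \<le> ex_density Q P n"
proof -
  let ?s = "card (fst Q)"
  have "decseq (\<lambda>i. ex_density Q P (i + ?s))"
    unfolding decseq_Suc_iff using ex_density_Suc_le[OF assms] by simp
  moreover have "\<forall>i. 0 \<le> ex_density Q P (i + ?s)" by (simp add: ex_density_def)
  ultimately obtain L where L: "(\<lambda>i. ex_density Q P (i + ?s)) \<longlonglongrightarrow> L"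
    and L_le: "\<And>i. L \<le> ex_density Q P (i + ?s)"
    using decseq_convergent by blast
  have lim: "ex_density Q P \<longlonglongrightarrow> L" using L by (rule LIMSEQ_offset)
  moreover have "piQ Q P = L"
    using lim unfolding piQ_def ex_density_def[abs_def] by (rule limI)
  ultimately show "ex_density Q P \<longlonglongrightarrow> piQ Q P" by simp
  show "piQ Q P \<le> ex_density Q P n" if "?s \<le> n"
    using L_le[of "n - ?s"] that \<open>piQ Q P = L\<close> by simp
qed

lemma piQ_mult_choose_le_exQ:
  assumes "hereditary r P" and "0 < r" and "P \<noteq> {}" and "finite (fst Q)" and "card (fst Q) \<le> n"
  shows "piQ Q P * real (n choose card (fst Q)) \<le> real (exQ Q P n)"
  using ex_density_tendsto_piQ(2)[OF assms] assms(5) by (simp add: ex_density_def le_divide_eq)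

lemma piQ_le_copies_bound:
  assumes "hereditary r P" and "0 < r" and "P \<noteq> {}" and "finite (fst Q)"
    and bound: "\<And>I E. finite I \<Longrightarrow> card I = card (fst Q) \<Longrightarrow> real (copies Q (I, E)) \<le> b"
  shows "piQ Q P \<le> b"
proof (rule LIMSEQ_le_const2[OF ex_density_tendsto_piQ(1)[OF assms(1-4)]])
  let ?s = "card (fst Q)"
  have "ex_density Q P n \<le> b" if "?s \<le> n" for n
  proof -
    obtain H where H: "H \<in> Pn P n" "copies Q H = exQ Q P n" using exQ_attained[OF assms(1-3)] by blast
    have fH: "fst H = {..<n}" using H(1) by (simp add: Pn_def)
    have "real (exQ Q P n) = (\<Sum>I\<in>ksets {..<n} ?s. real (copies Q (induced H I)))"
      using copies_eq_sum_induced[of H Q] H(2) fH assms(4) by simp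
    also have "\<dots> \<le> (\<Sum>I\<in>ksets {..<n} ?s. b)"
      using finite_ksets_member[of "{..<n}"] by (intro sum_mono) (auto simp: induced_def ksets_def bound)
    also have "\<dots> = b * real (n choose ?s)" by (simp add: card_ksets)
    finally show ?thesis using that by (simp add: ex_density_def divide_le_eq)
  qed
  then show "\<exists>N. \<forall>n\<ge>N. ex_density Q P n \<le> b" by blast
qed

lemma piQ_le_fact:
  assumes "hereditary r P" and "0 < r" and "P \<noteq> {}" and "is_rgraph r Q"
  shows "piQ Q P \<le> fact (card (fst Q))"
proof -
  have "\<forall>e\<in>snd Q. e \<subseteq> fst Q" and fQ: "finite (fst Q)" using assms(4) by (auto simp: is_rgraph_def)
  then show ?thesis
    using piQ_le_copies_bound[OF assms(1-3) fQ] copies_le_fact by (metis of_nat_fact of_nat_mono)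
qed

lemma piQ_le_one:
  assumes "hereditary r P" and "2 \<le> r" and "P \<noteq> {}" and "is_rgraph r Q" and "card (fst Q) = 2"
  shows "piQ Q P \<le> 1"
proof -
  have fQ: "finite (fst Q)" using assms(4) by (simp add: is_rgraph_def)
  show ?thesis
    using piQ_le_copies_bound[OF assms(1) _ assms(3) fQ] copies_le_one[OF assms(4,2,5)] assms(2)
    by (metis of_nat_le_1_iff less_le_trans pos2)
qed

section \<open>The polynomial \<open>P\<^sub>Q\<^sub>,\<^sub>H\<close> and its Lagrangian\<close>

lemma polyQ_eq_ksets:
  "polyQ Q H x = fact (card (fst Q)) *
     (\<Sum>I\<in>ksets (fst H) (card (fst Q)). real (copies Q (induced H I)) * (\<Prod>i\<in>I. x i))"
  by (simp add: polyQ_def ksets_def)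

definition polyQ_avoiding :: "hgraph \<Rightarrow> hgraph \<Rightarrow> nat \<Rightarrow> (nat \<Rightarrow> real) \<Rightarrow> real" where
  "polyQ_avoiding Q H v x = fact (card (fst Q)) *
     (\<Sum>I\<in>{I \<in> ksets (fst H) (card (fst Q)). v \<notin> I}. real (copies Q (induced H I)) * (\<Prod>i\<in>I. x i))"

definition polyQ_partial :: "hgraph \<Rightarrow> hgraph \<Rightarrow> nat \<Rightarrow> (nat \<Rightarrow> real) \<Rightarrow> real" where
  "polyQ_partial Q H v x = fact (card (fst Q)) *
     (\<Sum>I\<in>{I \<in> ksets (fst H) (card (fst Q)). v \<in> I}. real (copies Q (induced H I)) * (\<Prod>i\<in>I - {v}. x i))"

lemma polyQ_split:
  assumes "finite (fst H)"
  shows "polyQ Q H x = polyQ_avoiding Q H v x + x v * polyQ_partial Q H v x"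
proof -
  let ?T = "ksets (fst H) (card (fst Q))"
  let ?f = "\<lambda>I. real (copies Q (induced H I)) * (\<Prod>i\<in>I. x i)"
  have split: "?T = {I \<in> ?T. v \<notin> I} \<union> {I \<in> ?T. v \<in> I}" by blast
  have "sum ?f ?T = sum ?f {I \<in> ?T. v \<notin> I} + sum ?f {I \<in> ?T. v \<in> I}"
    by (subst split, rule sum.union_disjoint) (use finite_ksets[OF assms] in auto)
  also have "sum ?f {I \<in> ?T. v \<in> I} =
      x v * (\<Sum>I\<in>{I \<in> ?T. v \<in> I}. real (copies Q (induced H I)) * (\<Prod>i\<in>I - {v}. x i))"
    unfolding sum_distrib_left
    using finite_ksets_member[OF assms] by (intro sum.cong refl) (auto simp: prod.remove)
  finally show ?thesis
    unfolding polyQ_eq_ksets polyQ_avoiding_def polyQ_partial_def by (simp add: algebra_simps)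
qed

lemma polyQ_avoiding_fun_upd: "polyQ_avoiding Q H v (x(v := t)) = polyQ_avoiding Q H v x"
  unfolding polyQ_avoiding_def by (intro arg_cong2[where f = "(*)"] refl sum.cong prod.cong) auto

lemma polyQ_partial_fun_upd: "polyQ_partial Q H v (x(v := t)) = polyQ_partial Q H v x"
  unfolding polyQ_partial_def by (intro arg_cong2[where f = "(*)"] refl sum.cong prod.cong) auto

lemma polyQ_homogeneous:
  "polyQ Q H (\<lambda>i. c * y i) = c ^ card (fst Q) * polyQ Q H y"
proof -
  have "(\<Prod>i\<in>I. c * y i) = c ^ card (fst Q) * (\<Prod>i\<in>I. y i)"
    if "I \<in> ksets (fst H) (card (fst Q))" for I
    using that by (simp add: prod.distrib ksets_def)
  then show ?thesis
    unfolding polyQ_eq_ksets sum_distrib_left by (simp add: algebra_simps cong: sum.cong)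
qed

lemma pnorm_eq_1_iff:
  assumes "p > 0"
  shows "pnorm p V x = 1 \<longleftrightarrow> (\<Sum>i\<in>V. \<bar>x i\<bar> powr p) = 1"
proof
  let ?S = "\<Sum>i\<in>V. \<bar>x i\<bar> powr p"
  assume "pnorm p V x = 1"
  then have S: "?S powr (1 / p) = 1" by (simp add: pnorm_def)
  then have "?S \<noteq> 0" by auto
  moreover have "?S \<ge> 0" by (intro sum_nonneg) simp
  ultimately have "?S = (?S powr (1 / p)) powr p" using assms by (simp add: powr_powr)
  then show "?S = 1" using S by simp
qed (simp add: pnorm_def)

lemma abs_le_1_of_pnorm_eq_1:
  assumes "p > 0" and "finite V" and "pnorm p V x = 1" and "i \<in> V"
  shows "\<bar>x i\<bar> \<le> 1"
proof (rule le_one_of_powr_le_one[OF _ assms(1)])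
  have "\<bar>x i\<bar> powr p \<le> (\<Sum>j\<in>V. \<bar>x j\<bar> powr p)"
    by (rule member_le_sum[OF assms(4) _ assms(2)]) simp
  then show "\<bar>x i\<bar> powr p \<le> 1" using assms(1,3) pnorm_eq_1_iff by simp
qed simp

lemma bdd_above_polyQ:
  assumes "p > 0" and "finite (fst H)"
  shows "bdd_above {polyQ Q H x | x. pnorm p (fst H) x = 1}"
proof (rule bdd_aboveI)
  fix y assume "y \<in> {polyQ Q H x | x. pnorm p (fst H) x = 1}"
  then obtain x where x: "pnorm p (fst H) x = 1" and y: "y = polyQ Q H x" by blast
  have "(\<Prod>i\<in>I. x i) \<le> 1" if "I \<in> ksets (fst H) (card (fst Q))" for I
  proof -
    have "(\<Prod>i\<in>I. \<bar>x i\<bar>) \<le> 1"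
      using abs_le_1_of_pnorm_eq_1[OF assms x] that by (intro prod_le_1) (auto simp: ksets_def)
    then show ?thesis by (metis abs_prod abs_le_D1)
  qed
  then show "y \<le> fact (card (fst Q)) * (\<Sum>I\<in>ksets (fst H) (card (fst Q)). real (copies Q (induced H I)))"
    unfolding y polyQ_eq_ksets by (intro mult_left_mono sum_mono) (auto simp: mult_left_le)
qed

lemma polyQ_le_lamQ:
  assumes "p > 0" and "finite (fst H)" and "pnorm p (fst H) x = 1"
  shows "polyQ Q H x \<le> lamQ p Q H"
  unfolding lamQ_def using assms by (intro cSup_upper bdd_above_polyQ) auto

lemma polyQ_le_lamQ_mult_norm:
  assumes "p > 0" and "finite (fst H)" and pos: "0 < (\<Sum>i\<in>fst H. \<bar>y i\<bar> powr p)"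
  shows "polyQ Q H y \<le> lamQ p Q H * (\<Sum>i\<in>fst H. \<bar>y i\<bar> powr p) powr (card (fst Q) / p)"
proof -
  let ?S = "\<Sum>i\<in>fst H. \<bar>y i\<bar> powr p"
  define \<rho> where "\<rho> = ?S powr (1 / p)"
  have \<rho>: "0 < \<rho>" "\<rho> powr p = ?S" using pos assms(1) by (simp_all add: \<rho>_def powr_powr)
  have "(\<Sum>i\<in>fst H. \<bar>y i / \<rho>\<bar> powr p) = (\<Sum>i\<in>fst H. \<bar>y i\<bar> powr p) / \<rho> powr p"
    using \<rho>(1) by (simp add: abs_divide powr_divide sum_divide_distrib)
  then have "pnorm p (fst H) (\<lambda>i. (1 / \<rho>) * y i) = 1"
    using \<rho> pos pnorm_eq_1_iff[OF assms(1)] by simp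
  then have "(1 / \<rho>) ^ card (fst Q) * polyQ Q H y \<le> lamQ p Q H"
    using polyQ_le_lamQ[OF assms(1,2)] polyQ_homogeneous by metis
  then have "polyQ Q H y \<le> lamQ p Q H * \<rho> ^ card (fst Q)"
    using \<rho>(1) by (simp add: field_simps power_divide)
  also have "\<rho> ^ card (fst Q) = ?S powr (card (fst Q) / p)"
    using \<rho>(1) by (simp add: \<rho>_def powr_realpow[symmetric] powr_powr)
  finally show ?thesis .
qed

lemma polyQ_fun_upd_le_lamQ:
  assumes "p > 0" and "finite (fst H)" and "v \<in> fst H" and "pnorm p (fst H) x = 1" and "0 < t"
  shows "polyQ_avoiding Q H v x + t * polyQ_partial Q H v x
    \<le> lamQ p Q H * (1 - \<bar>x v\<bar> powr p + t powr p) powr (card (fst Q) / p)"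
proof -
  have "(\<Sum>i\<in>fst H. \<bar>x i\<bar> powr p) = 1" using assms(4) pnorm_eq_1_iff[OF assms(1)] by simp
  then have rest: "(\<Sum>i\<in>fst H - {v}. \<bar>x i\<bar> powr p) = 1 - \<bar>x v\<bar> powr p"
    using sum.remove[OF assms(2,3), of "\<lambda>i. \<bar>x i\<bar> powr p"] by simp
  have "(\<Sum>i\<in>fst H. \<bar>(x(v := t)) i\<bar> powr p) = \<bar>t\<bar> powr p + (\<Sum>i\<in>fst H - {v}. \<bar>x i\<bar> powr p)"
    using sum.remove[OF assms(2,3), of "\<lambda>i. \<bar>(x(v := t)) i\<bar> powr p"] by simp
  then have norm_upd: "(\<Sum>i\<in>fst H. \<bar>(x(v := t)) i\<bar> powr p) = 1 - \<bar>x v\<bar> powr p + t powr p"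
    using rest assms(5) by simp
  have "0 \<le> (\<Sum>i\<in>fst H - {v}. \<bar>x i\<bar> powr p)" by (rule sum_nonneg) simp
  then have "0 < 1 - \<bar>x v\<bar> powr p + t powr p" using rest powr_gt_zero[of t p] assms(5) by linarith
  then have "polyQ Q H (x(v := t)) \<le> lamQ p Q H * (1 - \<bar>x v\<bar> powr p + t powr p) powr (card (fst Q) / p)"
    using polyQ_le_lamQ_mult_norm[OF assms(1,2), where y = "x(v := t)" and Q = Q] norm_upd by simp
  moreover have "polyQ Q H (x(v := t)) = polyQ_avoiding Q H v x + t * polyQ_partial Q H v x"
    using polyQ_split[OF assms(2), where x = "x(v := t)" and v = v]
    by (simp add: polyQ_avoiding_fun_upd polyQ_partial_fun_upd)
  ultimately show ?thesis by simp
qed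

text \<open>Lagrange condition: by \<open>polyQ_fun_upd_le_lamQ\<close> the function of \<open>t\<close> on its right minus its left
  side is nonnegative and vanishes at \<open>t = x\<^sub>v\<close>, so its derivative vanishes there.\<close>

lemma principal_eigvec_partial:
  assumes "p > 1" and "finite (fst H)" and "v \<in> fst H"
    and "principal_eigvec p Q H x" and "0 < x v"
  shows "polyQ_partial Q H v x = real (card (fst Q)) * lamQ p Q H * x v powr (p - 1)"
proof -
  let ?s = "card (fst Q)"
  define L where "L = lamQ p Q H"
  define a where "a = x v"
  define R where "R = polyQ_avoiding Q H v x"
  define B where "B = polyQ_partial Q H v x"
  define T where "T t = 1 - a powr p + t powr p" for t
  define f where "f h = L * T (a + h) powr (?s / p) - (R + (a + h) * B)" for h
  have p0: "p > 0" using assms(1) by simp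
  have norm: "pnorm p (fst H) x = 1" and lam: "polyQ Q H x = L"
    using assms(4) by (auto simp: principal_eigvec_def L_def)
  have "f 0 = 0"
    using polyQ_split[OF assms(2), where x = x and v = v] lam by (simp add: f_def T_def R_def B_def a_def)
  moreover have "0 \<le> f h" if "\<bar>0 - h\<bar> < a" for h
    using polyQ_fun_upd_le_lamQ[OF p0 assms(2,3) norm, of "a + h"] that assms(5)
    by (simp add: f_def T_def L_def R_def B_def a_def)
  ultimately have min: "\<forall>h. \<bar>0 - h\<bar> < a \<longrightarrow> f 0 \<le> f h" by simp
  have "T a = 1" by (simp add: T_def)
  have deriv: "(f has_real_derivative L * (?s / p * T a powr (?s / p - 1) * (p * a powr (p - 1))) - B) (at 0)"
    unfolding f_def T_def using assms(5) \<open>T a = 1\<close> p0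
    by (auto intro!: derivative_eq_intros simp: a_def T_def)
  have "L * (?s / p * T a powr (?s / p - 1) * (p * a powr (p - 1))) - B = 0"
    by (rule DERIV_local_min[OF deriv _ min]) (use assms(5) in \<open>simp add: a_def\<close>)
  then show ?thesis using p0 \<open>T a = 1\<close> by (simp add: B_def L_def a_def mult_ac)
qed

lemma lamQ_ge_uniform:
  assumes "p > 0" and "finite (fst Q)" and "fst H = {..<n}" and "0 < n"
  shows "fact (card (fst Q)) * real (copies Q H) * real n powr (- real (card (fst Q)) / p) \<le> lamQ p Q H"
proof -
  let ?s = "card (fst Q)"
  define u where "u = real n powr (- 1 / p)"
  have u0: "u > 0" using assms(4) by (simp add: u_def)
  have "u powr p = real n powr (- 1 / p * p)" unfolding u_def by (rule powr_powr)
  then have "real n * u powr p = 1" using assms(1,4) by (simp add: powr_minus)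
  then have "pnorm p (fst H) (\<lambda>i. u) = 1"
    using u0 assms(3) pnorm_eq_1_iff[OF assms(1)] by simp
  then have "polyQ Q H (\<lambda>i. u * 1) \<le> lamQ p Q H" using polyQ_le_lamQ[OF assms(1)] assms(3) by simp
  moreover have "polyQ Q H (\<lambda>i. 1) = fact ?s * real (copies Q H)"
    using copies_eq_sum_induced[of H Q] assms(2,3) by (simp add: polyQ_eq_ksets)
  moreover have "u ^ ?s = real n powr (- real ?s / p)"
    using u0 by (simp add: u_def powr_realpow[symmetric] powr_powr)
  ultimately show ?thesis by (simp only: polyQ_homogeneous) (simp add: algebra_simps)
qed

lemma lamQ_prop_ge_piQ:
  assumes "p > 0" and "hereditary r P" and "0 < r" and "P \<noteq> {}" and "finite (fst Q)"
    and "card (fst Q) \<le> n" and "0 < n"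
  shows "fact (card (fst Q)) * piQ Q P * real (n choose card (fst Q)) * real n powr (- real (card (fst Q)) / p)
    \<le> lamQ_prop p Q P n"
proof -
  let ?s = "card (fst Q)"
  obtain H where H: "H \<in> Pn P n" "copies Q H = exQ Q P n" using exQ_attained[OF assms(2-4)] by blast
  have "fact ?s * (piQ Q P * real (n choose ?s)) * real n powr (- real ?s / p)
      \<le> fact ?s * real (exQ Q P n) * real n powr (- real ?s / p)"
    using piQ_mult_choose_le_exQ[OF assms(2-6)] by (intro mult_right_mono mult_left_mono) auto
  also have "\<dots> \<le> lamQ p Q H"
    using lamQ_ge_uniform[OF assms(1,5) _ assms(7), of H] H by (simp add: Pn_def)
  also have "\<dots> \<le> lamQ_prop p Q P n"
    unfolding lamQ_prop_def using H(1) finite_Pn[OF assms(2)] by (intro cSup_upper) auto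
  finally show ?thesis by (simp add: mult.assoc)
qed

section \<open>Elementary symmetric sums and power means\<close>

lemma bij_betw_insert_ksets:
  assumes "finite W" and "i \<in> W"
  shows "bij_betw (insert i) (ksets (W - {i}) k) {K \<in> ksets W (Suc k). i \<in> K}"
proof (rule bij_betw_imageI)
  show "inj_on (insert i) (ksets (W - {i}) k)"
  proof (rule inj_onI)
    fix J1 J2 assume "J1 \<in> ksets (W - {i}) k" "J2 \<in> ksets (W - {i}) k" "insert i J1 = insert i J2"
    then show "J1 = J2" using insert_ident[of i J1 J2] by (auto simp: ksets_def)
  qed
  show "insert i ` ksets (W - {i}) k = {K \<in> ksets W (Suc k). i \<in> K}"
  proof (intro equalityI subsetI)
    fix K assume "K \<in> insert i ` ksets (W - {i}) k"
    then obtain J where J: "J \<subseteq> W - {i}" "card J = k" "K = insert i J" by (auto simp: ksets_def)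
    moreover have "finite J" and "i \<notin> J" using J(1) assms(1) finite_subset by blast+
    ultimately show "K \<in> {K \<in> ksets W (Suc k). i \<in> K}" using assms(2) by (auto simp: ksets_def)
  next
    fix K assume K: "K \<in> {K \<in> ksets W (Suc k). i \<in> K}"
    then have "finite K" using finite_ksets_member[OF assms(1)] by blast
    then have "K - {i} \<in> ksets (W - {i}) k" using K by (auto simp: ksets_def)
    moreover have "K = insert i (K - {i})" using K by blast
    ultimately show "K \<in> insert i ` ksets (W - {i}) k" by blast
  qed
qed

lemma sum_ksets_containing:
  assumes "finite W" and "i \<in> W"
  shows "(\<Sum>K\<in>{K \<in> ksets W (Suc k). i \<in> K}. f (K - {i})) = (\<Sum>J\<in>ksets (W - {i}) k. f J)"
proof -
  have "(\<Sum>K\<in>{K \<in> ksets W (Suc k). i \<in> K}. f (K - {i})) = (\<Sum>J\<in>ksets (W - {i}) k. f (insert i J - {i}))"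
    by (rule sum.reindex_bij_betw[OF bij_betw_insert_ksets[OF assms], symmetric])
  also have "\<dots> = (\<Sum>J\<in>ksets (W - {i}) k. f J)"
  proof (intro sum.cong refl)
    fix J assume "J \<in> ksets (W - {i}) k"
    then have "i \<notin> J" by (auto simp: ksets_def)
    then show "f (insert i J - {i}) = f J" by simp
  qed
  finally show ?thesis .
qed

lemma card_ksets_containing:
  assumes "finite W" and "i \<in> W"
  shows "card {K \<in> ksets W (Suc k). i \<in> K} = card W - 1 choose k"
  using bij_betw_same_card[OF bij_betw_insert_ksets[OF assms]] card_ksets[of "W - {i}" k] assms
  by simp

definition esym :: "(nat \<Rightarrow> real) \<Rightarrow> nat set \<Rightarrow> nat \<Rightarrow> real" where
  "esym x W k = (\<Sum>J\<in>ksets W k. \<Prod>j\<in>J. x j)"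

lemma esym_mono:
  assumes "finite W" and "V \<subseteq> W" and "\<And>i. i \<in> W \<Longrightarrow> 0 \<le> x i"
  shows "esym x V k \<le> esym x W k"
  unfolding esym_def using assms
  by (intro sum_mono2 finite_ksets) (auto simp: ksets_def intro!: prod_nonneg)

text \<open>Every \<open>(k + 1)\<close>-set \<open>K\<close> arises once from each \<open>i \<in> K\<close> as \<open>insert i (K - {i})\<close>, whence
  \<open>(k + 1) e\<^sub>k\<^sub>+\<^sub>1(W) = \<Sum>\<^sub>i x\<^sub>i e\<^sub>k(W - {i})\<close>.\<close>

lemma Suc_mult_esym_le:
  assumes "finite W" and "\<And>i. i \<in> W \<Longrightarrow> 0 \<le> x i"
  shows "real (Suc k) * esym x W (Suc k) \<le> (\<Sum>i\<in>W. x i) * esym x W k"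
proof -
  let ?T = "ksets W (Suc k)"
  have "real (Suc k) * esym x W (Suc k) = (\<Sum>K\<in>?T. \<Sum>i\<in>K. x i * (\<Prod>j\<in>K - {i}. x j))"
    unfolding esym_def sum_distrib_left
  proof (intro sum.cong refl)
    fix K assume K: "K \<in> ?T"
    then have "(\<Sum>i\<in>K. x i * (\<Prod>j\<in>K - {i}. x j)) = (\<Sum>i\<in>K. \<Prod>j\<in>K. x j)"
      using finite_ksets_member[OF assms(1) K] by (intro sum.cong refl prod.remove[symmetric])
    then show "real (Suc k) * (\<Prod>j\<in>K. x j) = (\<Sum>i\<in>K. x i * (\<Prod>j\<in>K - {i}. x j))"
      using K by (simp add: ksets_def)
  qed
  also have "\<dots> = (\<Sum>K\<in>?T. \<Sum>i\<in>{i \<in> W. i \<in> K}. x i * (\<Prod>j\<in>K - {i}. x j))"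
  proof (rule sum.cong[OF refl])
    fix K assume "K \<in> ?T"
    then have "{i \<in> W. i \<in> K} = K" by (auto simp: ksets_def)
    then show "(\<Sum>i\<in>K. x i * (\<Prod>j\<in>K - {i}. x j)) = (\<Sum>i\<in>{i \<in> W. i \<in> K}. x i * (\<Prod>j\<in>K - {i}. x j))"
      by simp
  qed
  also have "\<dots> = (\<Sum>i\<in>W. \<Sum>K\<in>{K \<in> ?T. i \<in> K}. x i * (\<Prod>j\<in>K - {i}. x j))"
    by (rule sum.swap_restrict[OF finite_ksets[OF assms(1)] assms(1)])
  also have "\<dots> = (\<Sum>i\<in>W. x i * esym x (W - {i}) k)"
  proof (rule sum.cong[OF refl])
    fix i assume "i \<in> W"
    show "(\<Sum>K\<in>{K \<in> ?T. i \<in> K}. x i * (\<Prod>j\<in>K - {i}. x j)) = x i * esym x (W - {i}) k"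
      using sum_ksets_containing[OF assms(1) \<open>i \<in> W\<close>, where k = k and f = "\<lambda>J. x i * (\<Prod>j\<in>J. x j)"]
      by (simp add: esym_def sum_distrib_left)
  qed
  also have "\<dots> \<le> (\<Sum>i\<in>W. x i * esym x W k)"
    using esym_mono[OF assms(1) _ assms(2)] assms(2) by (intro sum_mono mult_left_mono) auto
  also have "\<dots> = (\<Sum>i\<in>W. x i) * esym x W k" by (simp add: sum_distrib_right)
  finally show ?thesis .
qed

lemma fact_mult_esym_le:
  assumes "finite W" and "\<And>i. i \<in> W \<Longrightarrow> 0 \<le> x i"
  shows "fact k * esym x W k \<le> (\<Sum>i\<in>W. x i) ^ k"
proof (induction k)
  case 0
  have "ksets W 0 = {{}}"
    using finite_ksets_member[OF assms(1), of _ 0] by (auto simp: ksets_def card_eq_0_iff)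
  then show ?case by (simp add: esym_def)
next
  case (Suc k)
  let ?S = "\<Sum>i\<in>W. x i"
  have "fact (Suc k) * esym x W (Suc k) = fact k * (real (Suc k) * esym x W (Suc k))" by simp
  also have "\<dots> \<le> fact k * (?S * esym x W k)"
    using Suc_mult_esym_le[OF assms] by (intro mult_left_mono) auto
  also have "\<dots> = ?S * (fact k * esym x W k)" by simp
  also have "\<dots> \<le> ?S * ?S ^ k" using Suc assms(2) by (intro mult_left_mono sum_nonneg) auto
  finally show ?case by simp
qed

lemma sum_le_card_powr_mult_norm:
  assumes "p \<ge> 1" and "finite W" and "W \<noteq> {}" and "\<And>i. i \<in> W \<Longrightarrow> 0 < x i"
  shows "(\<Sum>i\<in>W. x i) \<le> real (card W) powr (1 - 1 / p) * (\<Sum>i\<in>W. x i powr p) powr (1 / p)"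
proof -
  let ?N = "real (card W)" and ?S = "\<Sum>i\<in>W. x i"
  have N: "?N > 0" using assms(2,3) by (simp add: card_gt_0_iff)
  have "(?S / ?N) powr p \<le> (\<Sum>i\<in>W. x i powr p) / ?N"
    using convex_on_sum[OF assms(2,3) powr_convex[OF assms(1)], of "\<lambda>_. 1 / ?N" x] N assms(4)
    by (simp add: sum_distrib_left[symmetric] sum_divide_distrib[symmetric])
  then have "((?S / ?N) powr p) powr (1 / p) \<le> ((\<Sum>i\<in>W. x i powr p) / ?N) powr (1 / p)"
    using assms(1) by (intro powr_mono2) auto
  moreover have "((?S / ?N) powr p) powr (1 / p) = ?S / ?N"
    using assms(1,4) N by (simp add: powr_powr sum_nonneg less_imp_le)
  ultimately have "?S / ?N \<le> (\<Sum>i\<in>W. x i powr p) powr (1 / p) / ?N powr (1 / p)"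
    using N by (simp add: powr_divide sum_nonneg)
  then show ?thesis
    using N by (simp add: divide_le_eq powr_diff field_simps)
qed

lemma fact_mult_esym_le_powr:
  assumes "p \<ge> 1" and "finite W" and "W \<noteq> {}" and "\<And>i. i \<in> W \<Longrightarrow> 0 < x i"
    and "(\<Sum>i\<in>W. x i powr p) \<le> 1" and "card W \<le> n"
  shows "fact k * esym x W k \<le> (real n powr (1 - 1 / p)) ^ k"
proof -
  have "(\<Sum>i\<in>W. x i) \<le> real (card W) powr (1 - 1 / p) * (\<Sum>i\<in>W. x i powr p) powr (1 / p)"
    by (rule sum_le_card_powr_mult_norm[OF assms(1-4)])
  also have "\<dots> \<le> real n powr (1 - 1 / p) * 1"
  proof (rule mult_mono)
    have "(\<Sum>i\<in>W. x i powr p) powr (1 / p) \<le> 1 powr (1 / p)"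
      using assms(1,5) by (intro powr_mono2) (auto intro: sum_nonneg)
    then show "(\<Sum>i\<in>W. x i powr p) powr (1 / p) \<le> 1" by simp
  qed (use assms(1,6) in \<open>auto intro: powr_mono2\<close>)
  finally have "(\<Sum>i\<in>W. x i) \<le> real n powr (1 - 1 / p)" by simp
  moreover have "0 \<le> (\<Sum>i\<in>W. x i)" using assms(4) by (simp add: sum_nonneg less_imp_le)
  ultimately show ?thesis
    using fact_mult_esym_le[OF assms(2), of x k] assms(4) by (smt (verit) less_imp_le power_mono)
qed

section \<open>Degrees at a principal eigenvector\<close>

lemma Qdeg_eq_sum: "Qdeg Q H v = (\<Sum>I\<in>{I \<in> ksets (fst H) (card (fst Q)). v \<in> I}. copies Q (induced H I))"
  by (simp add: Qdeg_def ksets_def conj_assoc)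

lemma polyQ_partial_le:
  assumes "finite (fst H)" and "v \<in> fst H" and "card (fst Q) = Suc k"
    and "\<And>i. i \<in> fst H \<Longrightarrow> m \<le> x i" and "0 \<le> m"
    and "\<And>I. I \<in> ksets (fst H) (Suc k) \<Longrightarrow> real (copies Q (induced H I)) \<le> c"
  shows "polyQ_partial Q H v x \<le> fact (Suc k) *
    (real (Qdeg Q H v) * m ^ k + c * (esym x (fst H - {v}) k - real (card (fst H) - 1 choose k) * m ^ k))"
proof -
  let ?T = "{I \<in> ksets (fst H) (Suc k). v \<in> I}"
  define N where "N I = real (copies Q (induced H I))" for I
  define R where "R I = (\<Prod>i\<in>I - {v}. x i)" for I
  have bound: "N I * R I \<le> N I * m ^ k + c * (R I - m ^ k)" if I: "I \<in> ?T" for I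
  proof -
    have "finite I" using I finite_ksets_member[OF assms(1)] by blast
    with I have "card (I - {v}) = k" and "I \<subseteq> fst H" by (auto simp: ksets_def)
    then have "m ^ k = (\<Prod>i\<in>I - {v}. m)" by simp
    also have "\<dots> \<le> R I" unfolding R_def
      by (rule prod_mono) (use assms(4,5) \<open>I \<subseteq> fst H\<close> in auto)
    finally have "N I * (R I - m ^ k) \<le> c * (R I - m ^ k)"
      using assms(6) I by (intro mult_right_mono) (auto simp: N_def)
    then show ?thesis by (simp add: algebra_simps)
  qed
  have "(\<Sum>I\<in>?T. N I * R I) \<le> (\<Sum>I\<in>?T. N I * m ^ k + c * (R I - m ^ k))"
    using bound by (rule sum_mono)
  also have "\<dots> = (\<Sum>I\<in>?T. N I) * m ^ k + c * ((\<Sum>I\<in>?T. R I) - real (card ?T) * m ^ k)"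
    by (simp add: sum.distrib sum_distrib_left[symmetric] sum_distrib_right sum_subtractf)
  also have "(\<Sum>I\<in>?T. R I) = esym x (fst H - {v}) k"
    unfolding R_def esym_def by (rule sum_ksets_containing[OF assms(1,2)])
  also have "(\<Sum>I\<in>?T. N I) = real (Qdeg Q H v)" by (simp add: Qdeg_eq_sum N_def assms(3))
  also have "card ?T = card (fst H) - 1 choose k" by (rule card_ksets_containing[OF assms(1,2)])
  finally show ?thesis
    unfolding polyQ_partial_def N_def R_def assms(3) by (intro mult_left_mono) auto
qed

lemma xmin_le:
  assumes "finite (fst H)" and "i \<in> fst H"
  shows "xmin H x \<le> x i"
  unfolding xmin_def using assms by simp

lemma principal_eigvec_partial_ge:
  assumes "p > 1" and "card (fst Q) = Suc k" and "fst H = {..<n}"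
    and lam: "fact (Suc k) * \<pi> * real (n choose Suc k) * real n powr (- real (Suc k) / p) \<le> lamQ p Q H"
    and "0 \<le> \<pi>" and pe: "principal_eigvec p Q H x" and "0 < xmin H x" and v: "v \<in> fst H"
  shows "fact (Suc k) * \<pi> * (real n * real (n - 1 choose k)) * real n powr (- real (Suc k) / p)
      * xmin H x powr (p - 1) \<le> polyQ_partial Q H v x"
proof -
  let ?s = "Suc k"
  define m where "m = xmin H x"
  define L where "L = lamQ p Q H"
  have fV: "finite (fst H)" using assms(3) by simp
  have x_ge: "m \<le> x v" using xmin_le[OF fV v] by (simp add: m_def)
  have "0 \<le> fact ?s * \<pi> * real (n choose ?s) * real n powr (- real ?s / p)" using assms(5) by simp
  then have L0: "0 \<le> L" using lam by (simp add: L_def)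
  have absorb: "real ?s * real (n choose ?s) = real n * real (n - 1 choose k)"
    using arg_cong[OF binomial_absorption[of k n], of real] unfolding of_nat_mult .
  have "fact ?s * \<pi> * (real n * real (n - 1 choose k)) * real n powr (- real ?s / p) * m powr (p - 1)
      = real ?s * (fact ?s * \<pi> * real (n choose ?s) * real n powr (- real ?s / p)) * m powr (p - 1)"
    unfolding absorb[symmetric] by (simp only: mult_ac)
  also have "\<dots> \<le> real ?s * L * m powr (p - 1)"
    using lam by (intro mult_right_mono mult_left_mono) (simp_all add: L_def)
  also have "\<dots> \<le> real ?s * L * x v powr (p - 1)"
    using x_ge assms(1,7) L0 by (intro mult_left_mono powr_mono2) (auto simp: m_def)
  also have "\<dots> = polyQ_partial Q H v x"
    using principal_eigvec_partial[OF assms(1) fV v pe] x_ge assms(2,7) by (simp add: L_def m_def)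
  finally show ?thesis by (simp add: m_def)
qed

lemma principal_eigvec_partial_le:
  assumes "p > 1" and "\<forall>e\<in>snd Q. e \<subseteq> fst Q" and "card (fst Q) = Suc k"
    and fH: "fst H = {..<n}" and "Suc k < n"
    and pe: "principal_eigvec p Q H x" and "0 < xmin H x" and v: "v \<in> fst H"
  shows "polyQ_partial Q H v x \<le> fact (Suc k) * (real (Qdeg Q H v) * xmin H x ^ k
    + fact (Suc k) * ((real n powr (1 - 1 / p)) ^ k / fact k - real (n - 1 choose k) * xmin H x ^ k))"
proof -
  let ?s = "Suc k" and ?V = "fst H"
  define m where "m = xmin H x"
  define A where "A = (fact ?s :: real)"
  have p0: "p > 0" and fV: "finite ?V" and fQ: "finite (fst Q)"
    using assms(1,3) fH card_ge_0_finite by auto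
  have m0: "m > 0" using assms(7) by (simp add: m_def)
  have x_ge: "m \<le> x i" if "i \<in> ?V" for i using xmin_le[OF fV that] by (simp add: m_def)
  have copies_le: "real (copies Q (induced H I)) \<le> A" if "I \<in> ksets ?V ?s" for I
  proof -
    have "finite I" using finite_ksets_member[OF fV that] .
    moreover have "card I = card (fst Q)" using that assms(3) by (simp add: ksets_def)
    ultimately have "copies Q (induced H I) \<le> fact ?s"
      using copies_le_fact[OF assms(2) fQ] assms(3) by (simp add: induced_def)
    then show ?thesis unfolding A_def by (metis of_nat_fact of_nat_mono)
  qed
  have x0: "\<forall>i\<in>?V. 0 \<le> x i" and norm: "(\<Sum>i\<in>?V. \<bar>x i\<bar> powr p) = 1"
    using pe pnorm_eq_1_iff[OF p0] by (auto simp: principal_eigvec_def)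
  have "(\<Sum>i\<in>?V. \<bar>x i\<bar> powr p) = (\<Sum>i\<in>?V. x i powr p)" using x0 by (intro sum.cong) auto
  then have norm_rest: "(\<Sum>i\<in>?V - {v}. x i powr p) \<le> 1"
    using norm sum_mono2[OF fV, of "?V - {v}" "\<lambda>i. x i powr p"] by simp
  have card: "card (?V - {v}) = n - 1" using fH v by simp
  then have "0 < card (?V - {v})" using assms(5) by simp
  then have "?V - {v} \<noteq> {}" by (metis card.empty less_irrefl)
  moreover have "0 < x i" if "i \<in> ?V - {v}" for i using x_ge m0 that by force
  ultimately have "fact k * esym x (?V - {v}) k \<le> (real n powr (1 - 1 / p)) ^ k"
    using fact_mult_esym_le_powr[OF _ _ _ _ norm_rest, of n k] assms(1) fV card by simp
  then have esym_le: "esym x (?V - {v}) k \<le> (real n powr (1 - 1 / p)) ^ k / fact k"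
    by (simp add: field_simps)
  have "polyQ_partial Q H v x
      \<le> A * (real (Qdeg Q H v) * m ^ k + A * (esym x (?V - {v}) k - real (n - 1 choose k) * m ^ k))"
    using polyQ_partial_le[OF fV v assms(3) x_ge, where c = A] copies_le m0 fH
    by (simp add: A_def)
  also have "\<dots> \<le> A * (real (Qdeg Q H v) * m ^ k
      + A * ((real n powr (1 - 1 / p)) ^ k / fact k - real (n - 1 choose k) * m ^ k))"
    using esym_le by (intro mult_left_mono add_left_mono diff_right_mono) (auto simp: A_def)
  finally show ?thesis by (simp only: A_def m_def)
qed

text \<open>Here \<open>u\<close> is \<open>x\<^sub>m\<^sub>i\<^sub>n\<close> measured in units of the uniform entry \<open>n\<^bsup>-1/p\<^esup>\<close>; dividing both bounds
  on \<open>polyQ_partial\<close> by \<open>s! n\<^bsup>-k/p\<^esup>\<close> leaves this inequality.\<close>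

lemma Qdeg_inequality:
  assumes "p > 1" and "\<forall>e\<in>snd Q. e \<subseteq> fst Q" and "card (fst Q) = Suc k"
    and fH: "fst H = {..<n}" and "Suc k < n"
    and lam: "fact (Suc k) * \<pi> * real (n choose Suc k) * real n powr (- real (Suc k) / p) \<le> lamQ p Q H"
    and "0 \<le> \<pi>" and pe: "principal_eigvec p Q H x" and "0 < xmin H x" and v: "v \<in> fst H"
  defines "u \<equiv> real n powr (1 / p) * xmin H x"
  shows "\<pi> * real (n - 1 choose k) * u powr (p - 1)
    \<le> real (Qdeg Q H v) * u ^ k + fact (Suc k) * (real n ^ k / fact k - real (n - 1 choose k) * u ^ k)"
proof -
  let ?s = "Suc k"
  define m where "m = xmin H x"
  define w where "w = real n powr (- 1 / p)"
  define A where "A = (fact ?s :: real)"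
  define C where "C = real (n - 1 choose k)"
  have p0: "p > 0" and n0: "real n > 0" using assms(1,5) by auto
  have w0: "w > 0" and A0: "A > 0" and m0: "m > 0" using n0 assms(9) by (simp_all add: w_def A_def m_def)
  have "real n powr (1 / p) * w = 1" using n0 by (simp add: w_def powr_add[symmetric])
  then have m_u: "m = u * w" by (simp add: u_def m_def mult_ac)
  then have u0: "u > 0" using m0 w0 by (simp add: zero_less_mult_iff)
  have "w powr p = real n powr (- 1 / p * p)" unfolding w_def by (rule powr_powr)
  then have "w powr p = 1 / real n" using p0 n0 by (simp add: powr_minus divide_inverse)
  then have ww: "real n * (w * w powr (p - 1)) = 1" using w0 n0 by (simp add: powr_mult_base)
  have "w ^ ?s = w powr real ?s" using w0 by (rule powr_realpow[symmetric])
  also have "\<dots> = real n powr (- 1 / p * real ?s)" unfolding w_def by (rule powr_powr)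
  also have "- 1 / p * real ?s = - real ?s / p" by (simp only: times_divide_eq_left mult_minus_left mult_1)
  finally have w_s: "real n powr (- real ?s / p) = w ^ ?s" ..
  have "real n powr (1 - 1 / p) = real n * w" using n0 by (simp add: w_def powr_diff powr_minus divide_inverse)
  have "A * w ^ k * (\<pi> * C * u powr (p - 1))
      = A * \<pi> * (real n * C) * w ^ ?s * m powr (p - 1)"
    using ww u0 w0 by (simp add: m_u powr_mult mult_ac)
  also have "\<dots> \<le> polyQ_partial Q H v x"
    using principal_eigvec_partial_ge[OF assms(1,3) fH lam assms(7) pe assms(9) v] unfolding w_s A_def C_def m_def .
  also have "\<dots> \<le> A * (real (Qdeg Q H v) * m ^ k + A * ((real n * w) ^ k / fact k - C * m ^ k))"
    using principal_eigvec_partial_le[OF assms(1-3) fH assms(5) pe assms(9) v] \<open>real n powr (1 - 1 / p) = real n * w\<close>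
    by (simp add: A_def C_def m_def)
  also have "\<dots> = A * w ^ k * (real (Qdeg Q H v) * u ^ k + A * (real n ^ k / fact k - C * u ^ k))"
    by (simp add: m_u power_mult_distrib field_simps)
  finally have "A * w ^ k * (\<pi> * C * u powr (p - 1))
      \<le> A * w ^ k * (real (Qdeg Q H v) * u ^ k + A * (real n ^ k / fact k - C * u ^ k))" .
  moreover have "0 < A * w ^ k" using A0 w0 by simp
  ultimately show ?thesis unfolding A_def C_def by (rule mult_left_le_imp_le)
qed

lemma scaled_xmin_bounds:
  assumes "p > 0" and "fst H = {..<n}" and "0 < n" and "principal_eigvec p Q H x"
    and "(1 - \<epsilon>') / real n \<le> xmin H x powr p" and "\<epsilon>' < 1"
  defines "u \<equiv> real n powr (1 / p) * xmin H x"
  shows "0 < xmin H x" and "0 < u" and "u \<le> 1" and "1 - \<epsilon>' \<le> u powr p"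
proof -
  have fV: "finite (fst H)" and ne: "fst H \<noteq> {}" and n0: "0 < real n" using assms(2,3) by auto
  have x0: "\<forall>i\<in>fst H. 0 \<le> x i" and norm: "(\<Sum>i\<in>fst H. \<bar>x i\<bar> powr p) = 1"
    using assms(4) pnorm_eq_1_iff[OF assms(1)] by (auto simp: principal_eigvec_def)
  have m0: "0 \<le> xmin H x"
    unfolding xmin_def using Min_in[of "x ` fst H"] fV ne x0 by fastforce
  have "(\<Sum>i\<in>fst H. xmin H x powr p) \<le> (\<Sum>i\<in>fst H. \<bar>x i\<bar> powr p)"
    using xmin_le[OF fV] m0 assms(1) x0 by (intro sum_mono powr_mono2) auto
  then have "real n * xmin H x powr p \<le> 1" using norm assms(2) by simp
  moreover have up: "u powr p = real n * xmin H x powr p"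
    using n0 m0 assms(1) by (simp add: u_def powr_mult powr_powr)
  ultimately have "u powr p \<le> 1" by simp
  have "0 < (1 - \<epsilon>') / real n" using assms(6) n0 by simp
  then show m_pos: "0 < xmin H x" using assms(5) m0 by (cases "xmin H x = 0") auto
  then show u0: "0 < u" using n0 by (simp add: u_def)
  show "u \<le> 1" using le_one_of_powr_le_one[OF _ assms(1) \<open>u powr p \<le> 1\<close>] u0 by simp
  show "1 - \<epsilon>' \<le> u powr p" using assms(5) n0 up by (simp add: field_simps)
qed

lemma Qdeg_lower_bound:
  assumes "p > 1" and "\<forall>e\<in>snd Q. e \<subseteq> fst Q" and "card (fst Q) = Suc k" and "1 \<le> k"
    and fH: "fst H = {..<n}" and "Suc k < n"
    and lam: "fact (Suc k) * \<pi> * real (n choose Suc k) * real n powr (- real (Suc k) / p) \<le> lamQ p Q H"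
    and "0 < \<pi>" and "\<pi> \<le> fact (Suc k)"
    and "0 \<le> \<epsilon>'" and "2 * \<epsilon>' \<le> 1" and "fact (Suc k) * real k * \<epsilon>' \<le> \<epsilon>\<^sub>1 * \<pi>" and "\<epsilon>\<^sub>1 \<le> 1"
    and pe: "principal_eigvec p Q H x" and xm: "(1 - \<epsilon>') / real n \<le> xmin H x powr p"
    and v: "v \<in> fst H"
  shows "(1 - \<epsilon>\<^sub>1) * \<pi> * real (n - 1 choose k)
      - fact (Suc k) * (1 / (1 - \<epsilon>')) ^ k * (real n ^ k / fact k - real (n - 1 choose k))
    \<le> real (Qdeg Q H v)"
proof -
  define A where "A = (fact (Suc k) :: real)"
  define C where "C = real (n - 1 choose k)"
  define D where "D = real n ^ k / fact k - C"
  define u where "u = real n powr (1 / p) * xmin H x"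
  define X where "X = 1 / u"
  define e where "e = 1 - u powr p"
  have "\<epsilon>' < 1" using assms(11) by simp
  note u = scaled_xmin_bounds[OF _ fH _ pe xm this, folded u_def]
  have u0: "0 < u" and u1: "u \<le> 1" and e_le: "e \<le> \<epsilon>'" and "0 < xmin H x"
    using u assms(1,6) by (auto simp: e_def)
  have e0: "0 \<le> e" using u0 u1 assms(1) powr_le1[of p u] by (simp add: e_def)
  have "1 - \<epsilon>' \<le> u powr p" using e_le by (simp add: e_def)
  also have "u powr p \<le> u powr 1" using u0 u1 assms(1) by (intro powr_mono') auto
  finally have X_le: "X \<le> 1 / (1 - \<epsilon>')" using u0 assms(11) by (simp add: X_def frac_le)
  have X1: "1 \<le> X" using u0 u1 by (simp add: X_def)
  have eX: "(1 - e) * X = u powr (p - 1)" using u0 by (simp add: e_def X_def powr_diff)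
  have "u powr (p - 1) \<le> 1" using u0 u1 assms(1) by (intro powr_le1) auto
  have core: "(1 - \<epsilon>\<^sub>1) * \<pi> \<le> \<pi> * (1 - e) * X ^ (k + 1) - A * (X ^ k - 1)"
  proof (rule power_tradeoff_lower_bound[OF assms(4,8)])
    show "\<pi> \<le> A" using assms(9) by (simp add: A_def)
    have "A * real k * e \<le> A * real k * \<epsilon>'" using e_le by (intro mult_left_mono) (auto simp: A_def)
    also have "\<dots> \<le> \<epsilon>\<^sub>1 * \<pi>" using assms(12) by (simp add: A_def)
    finally show "A * real k * e \<le> \<epsilon>\<^sub>1 * \<pi>" .
  qed (use assms(13) e0 e_le assms(11) X1 eX \<open>u powr (p - 1) \<le> 1\<close> in auto)
  have deg: "\<pi> * C * u powr (p - 1) \<le> real (Qdeg Q H v) * u ^ k + A * (real n ^ k / fact k - C * u ^ k)"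
    unfolding A_def C_def u_def
    by (rule Qdeg_inequality[OF assms(1-3) fH assms(6) lam less_imp_le[OF assms(8)] pe \<open>0 < xmin H x\<close> v])
  have "real ((n - 1 choose k) * fact k) \<le> real ((n - 1) ^ k)" by (rule of_nat_mono[OF binomial_fact_pow])
  also have "\<dots> \<le> real n ^ k" by (simp add: power_mono)
  finally have D0: "0 \<le> D" by (simp add: D_def C_def field_simps)
  have "C * ((1 - \<epsilon>\<^sub>1) * \<pi>) - A * (1 / (1 - \<epsilon>')) ^ k * D \<le> C * (\<pi> * (1 - e) * X ^ (k + 1) - A * (X ^ k - 1)) - A * X ^ k * D"
    using core X_le X1 D0 by (intro diff_mono mult_left_mono mult_right_mono power_mono) (auto simp: A_def C_def)
  also have "\<dots> = X ^ k * (\<pi> * C * u powr (p - 1) - A * (real n ^ k / fact k - C * u ^ k))"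
    using u0 by (simp add: eX[symmetric] D_def X_def field_simps)
  also have "\<dots> \<le> X ^ k * (real (Qdeg Q H v) * u ^ k)"
    using deg X1 by (intro mult_left_mono) auto
  also have "\<dots> = real (Qdeg Q H v)" using u0 by (simp add: X_def power_one_over)
  finally show ?thesis by (simp add: A_def C_def D_def mult_ac)
qed

lemma min_Qdeg_ge:
  assumes "finite (fst H)" and "fst H \<noteq> {}" and "\<And>v. v \<in> fst H \<Longrightarrow> b \<le> real (Qdeg Q H v)"
  shows "b \<le> real (min_Qdeg Q H)"
proof -
  have "min_Qdeg Q H \<in> Qdeg Q H ` fst H" unfolding min_Qdeg_def using assms(1,2) by (intro Min_in) auto
  then show ?thesis using assms(3) by auto
qed

text \<open>For \<open>k = 1\<close> the bound on \<open>\<epsilon>'\<close> alone does not force \<open>\<epsilon>' \<le> 1/2\<close>; there \<open>\<pi> \<le> 1\<close> is needed.\<close>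

lemma small_eps_bounds:
  fixes \<pi> \<epsilon> \<epsilon>' :: real
  assumes "1 \<le> k" and "0 < \<pi>" and "\<pi> \<le> fact (Suc k)" and "k = 1 \<Longrightarrow> \<pi> \<le> 1"
    and "\<epsilon> < 1" and "0 \<le> \<epsilon>'" and "\<epsilon>' < \<epsilon> * \<pi> / (fact (Suc k) * real k)"
  shows "fact (Suc k) * real k * \<epsilon>' < \<epsilon> * \<pi>" and "2 * \<epsilon>' \<le> 1"
proof -
  have A: "0 < fact (Suc k) * real k" using assms(1) by simp
  then show lt: "fact (Suc k) * real k * \<epsilon>' < \<epsilon> * \<pi>" using assms(7) by (simp add: field_simps)
  have "\<epsilon> * \<pi> \<le> \<pi>" using assms(2,5) by simp
  show "2 * \<epsilon>' \<le> 1"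
  proof (cases "k = 1")
    case True
    then show ?thesis using lt assms(4) \<open>\<epsilon> * \<pi> \<le> \<pi>\<close> by simp
  next
    case False
    then have "fact (Suc k) * (2 * \<epsilon>') \<le> fact (Suc k) * real k * \<epsilon>'"
      using assms(1,6) by (simp add: mult_right_mono)
    also have "\<dots> < fact (Suc k) * 1" using lt assms(3) \<open>\<epsilon> * \<pi> \<le> \<pi>\<close> by linarith
    finally show ?thesis using fact_gt_zero[of "Suc k"] by (metis less_imp_le mult_less_cancel_left_pos)
  qed
qed

lemma min_Qdeg_lower_bound:
  assumes "p > 1" and "hereditary r P" and "0 < r" and "P \<noteq> {}" and "is_rgraph r Q"
    and "card (fst Q) = Suc k" and "1 \<le> k" and "Suc k < n"
    and "H \<in> Pn P n" and "lamQ p Q H = lamQ_prop p Q P n" and "0 < piQ Q P"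
    and "0 \<le> \<epsilon>'" and "2 * \<epsilon>' \<le> 1" and "fact (Suc k) * real k * \<epsilon>' \<le> \<epsilon>\<^sub>1 * piQ Q P" and "\<epsilon>\<^sub>1 \<le> 1"
    and "principal_eigvec p Q H x" and "(1 - \<epsilon>') / real n \<le> xmin H x powr p"
  shows "(1 - \<epsilon>\<^sub>1) * piQ Q P * real (n - 1 choose k)
      - fact (Suc k) * (1 / (1 - \<epsilon>')) ^ k * (real n ^ k / fact k - real (n - 1 choose k))
    \<le> real (min_Qdeg Q H)"
proof (rule min_Qdeg_ge)
  have fH: "fst H = {..<n}" using assms(9) by (simp add: Pn_def)
  then show "finite (fst H)" and "fst H \<noteq> {}" using assms(8) by auto
  have Q: "\<forall>e\<in>snd Q. e \<subseteq> fst Q" "finite (fst Q)" using assms(5) by (auto simp: is_rgraph_def)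
  have "fact (Suc k) * piQ Q P * real (n choose Suc k) * real n powr (- real (Suc k) / p) \<le> lamQ p Q H"
    using lamQ_prop_ge_piQ[OF _ assms(2-4) Q(2)] assms(1,6,8,10) by simp
  moreover have "piQ Q P \<le> fact (Suc k)" using piQ_le_fact[OF assms(2-5)] assms(6) by simp
  ultimately show "(1 - \<epsilon>\<^sub>1) * piQ Q P * real (n - 1 choose k)
      - fact (Suc k) * (1 / (1 - \<epsilon>')) ^ k * (real n ^ k / fact k - real (n - 1 choose k))
    \<le> real (Qdeg Q H v)" if "v \<in> fst H" for v
    using Qdeg_lower_bound[OF assms(1) Q(1) assms(6,7) fH assms(8) _ assms(11) _ assms(12-17) that]
    by blast
qed

theorem lemma4p2:
  fixes p \<epsilon> \<epsilon>' :: real and r s :: nat and Q :: hgraph and P :: "hgraph set"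
  assumes "p > 1" and "2 \<le> r" and "r \<le> s" and "0 < \<epsilon>" and "\<epsilon> < 1"
    and "is_rgraph r Q" and "card (fst Q) = s"
    and "hereditary r P"
    and "piQ Q P > 0"
    and "0 \<le> \<epsilon>'" and "\<epsilon>' < \<epsilon> * piQ Q P / (fact s * (real s - 1))"
  shows "\<exists>N. \<forall>n\<ge>N. \<forall>H x. H \<in> Pn P n \<longrightarrow> lamQ p Q H = lamQ_prop p Q P n \<longrightarrow>
            principal_eigvec p Q H x \<longrightarrow> xmin H x powr p \<ge> (1 - \<epsilon>') / real n \<longrightarrow>
            real (min_Qdeg Q H) \<ge> (1 - \<epsilon>) * piQ Q P * real (n choose (s - 1))"
proof (cases "P = {}")
  case True
  then show ?thesis by (simp add: Pn_def)
next
  case False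
  define k where "k = s - 1"
  have s: "s = Suc k" and k: "1 \<le> k" and r: "0 < r" using assms(2,3) by (auto simp: k_def)
  have \<epsilon>': "fact (Suc k) * real k * \<epsilon>' < \<epsilon> * piQ Q P" "2 * \<epsilon>' \<le> 1"
    using small_eps_bounds[OF k assms(9) _ _ assms(5,10)] assms(11) s
      piQ_le_fact[OF assms(8) r False assms(6)] piQ_le_one[OF assms(8,2) False assms(6)] assms(7)
    by auto
  obtain \<epsilon>\<^sub>1 where \<epsilon>\<^sub>1: "fact (Suc k) * real k * \<epsilon>' / piQ Q P < \<epsilon>\<^sub>1" "\<epsilon>\<^sub>1 < \<epsilon>"
    using dense \<epsilon>'(1) assms(9) by (metis pos_divide_less_eq)
  obtain N where N: "\<And>n. n \<ge> N \<Longrightarrow> (1 - \<epsilon>) * piQ Q P * real (n choose k)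
      \<le> (1 - \<epsilon>\<^sub>1) * piQ Q P * real (n - 1 choose k)
        - fact (Suc k) * (1 / (1 - \<epsilon>')) ^ k * (real n ^ k / fact k - real (n - 1 choose k))"
    using eventually_choose_tradeoff[of "(1 - \<epsilon>) * piQ Q P" "(1 - \<epsilon>\<^sub>1) * piQ Q P"
        "fact (Suc k) * (1 / (1 - \<epsilon>')) ^ k" k] \<epsilon>\<^sub>1(2) \<epsilon>'(2) assms(9)
    by (auto simp: eventually_sequentially)
  show ?thesis
    using order_trans[OF N min_Qdeg_lower_bound[OF assms(1,8) r False assms(6) _ k]] \<epsilon>\<^sub>1 assms(5,7,9,10) \<epsilon>'(2)
    by (intro exI[of _ "max N (Suc s)"]) (auto simp: s pos_divide_less_eq less_imp_le)
qed

end
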